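(* Let $p$ be a prime and $G$ a finite abelian group of order $p^\alpha$ with layer type $\lambda_1\ge\lambda_2\ge\cdots\ge\lambda_r$. Then $$|G|^{-1}\prod_{i\ge1}p^{\lambda_i^2/4}\ \le\ |\mathrm{Sub}(G)|\ \le\ |G|^2\prod_{i\ge1}p^{\lambda_i^2/4}.$$
   Context: For an abelian $p$-group $G$, $\Omega_i(G)$ is the subgroup of elements of order dividing $p^i$; $\Omega_i(G)/\Omega_{i-1}(G)$ is elementary abelian of order $p^{\lambda_i}$, and the sequence $\lambda_1\ge\lambda_2\ge\cdots\ge\lambda_r$ (the nonzero $\lambda_i$) is the layer type of $G$. $\mathrm{Sub}(G)$ is the set of subgroups of $G$. *)

theory Defs
  imports "HOL-Algebra.Algebra" "HOL-Computational_Algebra.Primes"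
begin

definition Omega :: "('a, 'b) monoid_scheme \<Rightarrow> nat \<Rightarrow> nat \<Rightarrow> 'a set" where
  "Omega G p i = {x \<in> carrier G. x [^]\<^bsub>G\<^esub> (p ^ i) = \<one>\<^bsub>G\<^esub>}"

definition layer :: "('a, 'b) monoid_scheme \<Rightarrow> nat \<Rightarrow> nat \<Rightarrow> nat" where
  "layer G p i = multiplicity p (order ((G\<lparr>carrier := Omega G p i\<rparr>) Mod (Omega G p (i - 1))))"

definition Sub :: "('a, 'b) monoid_scheme \<Rightarrow> 'a set set" where
  "Sub G = {H. subgroup H G}"

end

theory Submission
  imports Defs
begin

text \<open>
  Write \<open>\<lambda>\<^sub>k\<close> for the layers and \<open>\<mho>\<^sub>j(H) = {x\<^bsup>p\<^sup>j\<^esup> | x \<in> H}\<close>; then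
  \<open>\<Omega>\<^sub>1 \<inter> \<mho>\<^sub>k(G)\<close> has order \<open>p\<^bsup>\<lambda>\<^sub>k\<^sub>+\<^sub>1\<^esup>\<close> and the \<open>\<lambda>\<^sub>k\<close> decrease.

  Lower bound: a tuple \<open>(t\<^sub>s)\<close> with \<open>t\<^sub>s \<in> \<Omega>\<^bsub>c\<^sub>s\<^esub>\<close> generates a subgroup \<open>H\<close>
  with \<open>|H \<inter> \<Omega>\<^sub>c| \<le> p\<^bsup>\<Sum>\<^sub>s min(c\<^sub>s, c)\<^esup>\<close>, so at most \<open>p\<^bsup>\<Sum>\<^sub>s\<^sub>,\<^sub>s\<^sub>' min(c\<^sub>s, c\<^sub>s\<^sub>')\<^esup>\<close>
  tuples generate the same \<open>H\<close>. Taking for \<open>(c\<^sub>s)\<close> the partition conjugate to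
  \<open>(\<lfloor>\<lambda>\<^sub>k/2\<rfloor>)\<^sub>k\<close> yields \<open>|Sub(G)| \<ge> p\<^bsup>\<Sum>\<^sub>k \<lfloor>\<lambda>\<^sub>k/2\<rfloor>\<lceil>\<lambda>\<^sub>k/2\<rceil>\<^esup>\<close>.

  Upper bound: \<open>H \<mapsto> \<mho>\<^sub>1(H)\<close> maps the subgroups of \<open>S = \<mho>\<^sub>k(G)\<close> to those of \<open>\<mho>\<^sub>1(S)\<close>.
  A subgroup \<open>H\<close> in the fibre over \<open>K\<close> is determined by \<open>H \<inter> \<Omega>\<^sub>1\<close> and, for each generator
  of \<open>K\<close>, one coset of \<open>H \<inter> \<Omega>\<^sub>1\<close> in the elementary abelian group \<open>S \<inter> \<Omega>\<^sub>1\<close> of rank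
  \<open>\<lambda>\<^sub>k\<^sub>+\<^sub>1\<close>. By the Burnside basis theorem \<open>K\<close> needs no more generators than the rank of
  \<open>K \<inter> \<Omega>\<^sub>1\<close>, and counting subgroups of \<open>S \<inter> \<Omega>\<^sub>1\<close> bounds each fibre by
  \<open>p\<^bsup>\<lambda>\<^sup>2/4 + 2\<lambda>\<^esup>\<close> with \<open>\<lambda> = \<lambda>\<^sub>k\<^sub>+\<^sub>1\<close>; the product over \<open>k\<close> is the upper bound.
\<close>

lemma Collect_antimono_eq_atLeastAtMost:
  assumes "\<And>k k'. 1 \<le> k \<Longrightarrow> k \<le> k' \<Longrightarrow> P k' \<Longrightarrow> P k"
  shows "{k\<in>{1..n::nat}. P k} = {1..card {k\<in>{1..n}. P k}}"
proof (induction n)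
  case 0 then show ?case by simp
next
  case (Suc n)
  show ?case
  proof (cases "P (Suc n)")
    case True
    then have "{k\<in>{1..Suc n}. P k} = {1..Suc n}" using assms by auto
    then show ?thesis by simp
  next
    case False
    then have "{k\<in>{1..Suc n}. P k} = {k\<in>{1..n}. P k}" using le_Suc_eq by auto
    then show ?thesis using Suc by simp
  qed
qed

lemma card_less_less_eq:
  assumes "(m :: nat) \<le> r" shows "card {s\<in>{..<r}. s < m} = m"
proof -
  have "{s\<in>{..<r}. s < m} = {..<m}" using assms by auto
  then show ?thesis by simp
qed

text \<open>Double counting of the pairs \<open>(s, k)\<close> with \<open>s < f k\<close>: the sets
  \<open>{k. s < f k}\<close> for \<open>s < r\<close> form the conjugate of the partition \<open>f\<close>.\<close>

lemma sum_conjugate_eq: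
  fixes f w :: "'a \<Rightarrow> nat"
  assumes "finite A" and "\<And>k. k \<in> A \<Longrightarrow> f k \<le> r"
  shows "(\<Sum>s<r. \<Sum>k\<in>{k\<in>A. s < f k}. w k) = (\<Sum>k\<in>A. w k * f k)"
proof -
  have "(\<Sum>s<r. \<Sum>k\<in>{k\<in>A. s < f k}. w k) = (\<Sum>k\<in>A. \<Sum>s\<in>{s\<in>{..<r}. s < f k}. w k)"
    using sum.swap_restrict[OF finite_lessThan \<open>finite A\<close>, where g = "\<lambda>_. w" and R = "\<lambda>s k. s < f k"]
    by simp
  also have "\<dots> = (\<Sum>k\<in>A. w k * f k)"
    using assms(2) card_less_less_eq by (intro sum.cong) (auto simp: mult.commute)
  finally show ?thesis .
qed

lemma sum_card_conjugate_eq: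
  fixes f :: "'a \<Rightarrow> nat"
  assumes "finite A" and "\<And>k. k \<in> A \<Longrightarrow> f k \<le> r"
  shows "(\<Sum>s<r. \<Sum>s'<r. card {k\<in>A. s < f k \<and> s' < f k}) = (\<Sum>k\<in>A. f k * f k)"
proof -
  let ?b = "\<lambda>s k. if s < f k then 1 else 0 :: nat"
  have card_eq: "card {k\<in>A. s < f k \<and> s' < f k} = (\<Sum>k\<in>A. ?b s k * ?b s' k)" for s s'
  proof -
    have "card {k\<in>A. s < f k \<and> s' < f k} = (\<Sum>k\<in>A. if s < f k \<and> s' < f k then 1 else 0)"
      using \<open>finite A\<close> by (simp flip: sum.inter_filter)
    also have "\<dots> = (\<Sum>k\<in>A. ?b s k * ?b s' k)" by (intro sum.cong) auto
    finally show ?thesis .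
  qed
  have "(\<Sum>s<r. \<Sum>s'<r. \<Sum>k\<in>A. ?b s k * ?b s' k) = (\<Sum>s<r. \<Sum>k\<in>A. \<Sum>s'<r. ?b s k * ?b s' k)"
    by (rule sum.cong[OF refl], rule sum.swap)
  also have "\<dots> = (\<Sum>k\<in>A. \<Sum>s<r. \<Sum>s'<r. ?b s k * ?b s' k)" by (rule sum.swap)
  also have "\<dots> = (\<Sum>k\<in>A. (\<Sum>s<r. ?b s k) * (\<Sum>s'<r. ?b s' k))" by (simp only: sum_product)
  also have "\<dots> = (\<Sum>k\<in>A. f k * f k)"
  proof (rule sum.cong[OF refl])
    fix k assume "k \<in> A"
    have "(\<Sum>s<r. ?b s k) = card {s\<in>{..<r}. s < f k}" by (simp flip: sum.inter_filter)
    then show "(\<Sum>s<r. ?b s k) * (\<Sum>s'<r. ?b s' k) = f k * f k"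
      using card_less_less_eq assms(2)[OF \<open>k \<in> A\<close>] by simp
  qed
  finally show ?thesis by (simp only: card_eq)
qed

lemma quarter_square_minus_le:
  "real x ^ 2 / 4 - real x \<le> real x * real (x div 2) - real (x div 2) ^ 2"
proof -
  define q where "q = x div 2"
  have "x = 2 * q \<or> x = 2 * q + 1" unfolding q_def by presburger
  then show ?thesis unfolding q_def[symmetric] by (auto simp: power2_eq_square algebra_simps)
qed

lemma binomial_power_recurrence_le:
  fixes p :: nat
  assumes "1 \<le> p" and "u \<le> s"
  shows "(s choose Suc u) * p ^ (Suc u * (s - Suc u) + Suc u)
           + (s choose u) * p ^ (u * (s - u) + u) * p ^ (Suc s - u)
         \<le> (Suc s choose Suc u) * p ^ (Suc u * (Suc s - Suc u) + Suc u)"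
proof -
  let ?e = "Suc u * (Suc s - Suc u) + Suc u"
  have "Suc u * (s - Suc u) \<le> Suc u * (Suc s - Suc u)" by (intro mult_le_mono2) simp
  then have "p ^ (Suc u * (s - Suc u) + Suc u) \<le> p ^ ?e"
    using assms(1) by (intro power_increasing) auto
  then have first: "(s choose Suc u) * p ^ (Suc u * (s - Suc u) + Suc u) \<le> (s choose Suc u) * p ^ ?e"
    by (rule mult_le_mono2)
  obtain w where "s = u + w" using assms(2) le_Suc_ex by blast
  then have "u * (s - u) + u + (Suc s - u) = ?e" by (simp add: algebra_simps)
  then have "p ^ (u * (s - u) + u) * p ^ (Suc s - u) = p ^ ?e" by (metis power_add)
  then have second: "(s choose u) * p ^ (u * (s - u) + u) * p ^ (Suc s - u) = (s choose u) * p ^ ?e"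
    by (simp only: mult.assoc)
  have "(s choose Suc u) * p ^ (Suc u * (s - Suc u) + Suc u)
           + (s choose u) * p ^ (u * (s - u) + u) * p ^ (Suc s - u)
         \<le> (s choose Suc u) * p ^ ?e + (s choose u) * p ^ ?e"
    using first second by linarith
  also have "\<dots> = (Suc s choose Suc u) * p ^ ?e"
    by (simp only: binomial_Suc_Suc distrib_right add.commute)
  finally show ?thesis .
qed

lemma exponent_le_quarter_square:
  fixes t n d :: nat
  assumes "t \<le> n"
  shows "real (t * (n - t) + t + (n - t) * d) \<le> real (d + n) ^ 2 / 4 + real (d + n)"
proof -
  obtain w where w: "n = t + w" using assms le_Suc_ex by blast
  define x y where "x = real w" and "y = real t + real d"
  have "(x + y) ^ 2 - 4 * (x * y) = (x - y) ^ 2" by (simp add: power2_eq_square algebra_simps)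
  then have "4 * (x * y) \<le> (x + y) ^ 2" using zero_le_power2[of "x - y"] by linarith
  moreover have "real (t * (n - t) + t + (n - t) * d) = x * y + real t"
    unfolding w x_def y_def by (simp add: algebra_simps)
  moreover have "real (d + n) = x + y" unfolding w x_def y_def by simp
  ultimately show ?thesis using assms by simp
qed

lemma sum_binomial_power_le_powr:
  fixes p d n :: nat
  assumes "2 \<le> p"
  shows "real (\<Sum>t\<le>n. (n choose t) * p ^ (t * (n - t) + t) * p ^ ((n - t) * d))
    \<le> real p powr (real (d + n) ^ 2 / 4 + 2 * real (d + n))"
proof -
  let ?N = "real (d + n)"
  have "real (\<Sum>t\<le>n. (n choose t) * p ^ (t * (n - t) + t) * p ^ ((n - t) * d))
      = (\<Sum>t\<le>n. real (n choose t) * real p ^ (t * (n - t) + t + (n - t) * d))"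
    by (simp add: power_add mult.assoc)
  also have "\<dots> \<le> (\<Sum>t\<le>n. real (n choose t) * real p powr (?N ^ 2 / 4 + ?N))"
  proof (intro sum_mono mult_left_mono)
    fix t assume "t \<in> {..n}"
    have "real p ^ (t * (n - t) + t + (n - t) * d) = real p powr real (t * (n - t) + t + (n - t) * d)"
      using assms by (intro powr_realpow[symmetric]) simp
    also have "\<dots> \<le> real p powr (?N ^ 2 / 4 + ?N)"
      using exponent_le_quarter_square[of t n d] \<open>t \<in> {..n}\<close> assms by (intro powr_mono) auto
    finally show "real p ^ (t * (n - t) + t + (n - t) * d) \<le> real p powr (?N ^ 2 / 4 + ?N)" .
  qed simp
  also have "\<dots> = 2 ^ n * real p powr (?N ^ 2 / 4 + ?N)"
    by (simp flip: sum_distrib_right of_nat_sum add: choose_row_sum)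
  also have "\<dots> \<le> real p powr ?N * real p powr (?N ^ 2 / 4 + ?N)"
  proof (rule mult_right_mono)
    have "(2::nat) ^ n \<le> p ^ n" using power_mono[OF assms] by simp
    also have "\<dots> \<le> p ^ (d + n)" using assms by (intro power_increasing) auto
    finally have "(2::nat) ^ n \<le> p ^ (d + n)" .
    then have "(2::real) ^ n \<le> real p ^ (d + n)" by (metis of_nat_le_iff of_nat_numeral of_nat_power)
    moreover have "real p powr ?N = real p ^ (d + n)" using assms by (intro powr_realpow) simp
    ultimately show "2 ^ n \<le> real p powr ?N" by simp
  qed simp
  also have "\<dots> = real p powr (?N ^ 2 / 4 + 2 * ?N)" by (simp add: powr_add[symmetric] add_ac)
  finally show ?thesis .
qed

lemma (in group) subgroup_nat_pow_closed:
  "subgroup H G \<Longrightarrow> x \<in> H \<Longrightarrow> x [^] (n::nat) \<in> H"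
  by (induct n) (auto simp: subgroup.one_closed subgroup.m_closed)

lemma (in group) card_rcosets_subgroup:
  assumes C: "subgroup C G" and F: "subgroup F G" and CF: "C \<subseteq> F"
  shows "card (rcosets\<^bsub>G\<lparr>carrier := F\<rparr>\<^esub> C) * card C = card F"
proof -
  interpret F: group "G\<lparr>carrier := F\<rparr>"
    using subgroup.subgroup_is_group[OF F] is_group by blast
  have "subgroup C (G\<lparr>carrier := F\<rparr>)" using subgroup_incl C F CF by blast
  from F.lagrange[OF this] show ?thesis by (simp add: order_def)
qed

lemma (in group) card_rcosets_subgroup_eq_div:
  assumes "subgroup C G" "subgroup F G" "C \<subseteq> F" "finite C"
  shows "card (rcosets\<^bsub>G\<lparr>carrier := F\<rparr>\<^esub> C) = card F div card C"
proof -
  have "card C > 0" using assms(4) subgroup.one_closed[OF assms(1)] card_gt_0_iff by blast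
  then show ?thesis using card_rcosets_subgroup[OF assms(1-3)] by (metis div_mult_self_is_m)
qed

lemma (in group) card_subgroup_dvd:
  assumes "subgroup A G" "subgroup B G" "A \<subseteq> B"
  shows "card A dvd card B"
  using card_rcosets_subgroup[OF assms] by (metis dvd_triv_right)

lemma (in group) mem_rcosets_subgroup_iff:
  "R \<in> rcosets\<^bsub>G\<lparr>carrier := F\<rparr>\<^esub> C \<longleftrightarrow> (\<exists>b\<in>F. R = C #> b)"
  unfolding RCOSETS_def r_coset_def by auto

lemma (in group) card_set_mult_fibre:
  assumes B: "subgroup B G" and F: "subgroup F G" and b0: "b0 \<in> B" and f0: "f0 \<in> F"
  shows "card {q\<in>B \<times> F. fst q \<otimes> snd q = b0 \<otimes> f0} = card (B \<inter> F)"
proof -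
  let ?fibre = "{q\<in>B \<times> F. fst q \<otimes> snd q = b0 \<otimes> f0}"
  have Bc: "B \<subseteq> carrier G" and Fc: "F \<subseteq> carrier G" using B F subgroup.subset by auto
  have b0c: "b0 \<in> carrier G" and f0c: "f0 \<in> carrier G" using b0 f0 Bc Fc by auto
  have "bij_betw (\<lambda>c. (b0 \<otimes> c, inv c \<otimes> f0)) (B \<inter> F) ?fibre"
  proof (rule bij_betwI[where g = "\<lambda>q. inv b0 \<otimes> fst q"])
    show "(\<lambda>c. (b0 \<otimes> c, inv c \<otimes> f0)) \<in> B \<inter> F \<rightarrow> ?fibre"
      using b0 f0 b0c f0c Bc
      by (auto simp: subgroup.m_closed[OF B] subgroup.m_closed[OF F] subgroup.m_inv_closed[OF F]
          m_assoc[symmetric] subsetD) (simp add: m_assoc subsetD)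
    show "(\<lambda>q. inv b0 \<otimes> fst q) \<in> ?fibre \<rightarrow> B \<inter> F"
    proof
      fix q assume q: "q \<in> ?fibre"
      obtain b f where bf: "q = (b, f)" by (cases q)
      have b: "b \<in> B" and f: "f \<in> F" and bfz: "b \<otimes> f = b0 \<otimes> f0" using q bf by auto
      have bc: "b \<in> carrier G" and fc: "f \<in> carrier G" using b f Bc Fc by auto
      have "inv b0 \<otimes> b = inv b0 \<otimes> (b \<otimes> f) \<otimes> inv f" using bc fc b0c by (simp add: m_assoc)
      also have "\<dots> = f0 \<otimes> inv f" using bfz b0c f0c fc by (simp add: m_assoc[symmetric])
      finally have "inv b0 \<otimes> b \<in> F"
        using f f0 subgroup.m_closed[OF F] subgroup.m_inv_closed[OF F] by auto
      moreover have "inv b0 \<otimes> b \<in> B"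
        using b b0 subgroup.m_closed[OF B] subgroup.m_inv_closed[OF B] by auto
      ultimately show "inv b0 \<otimes> fst q \<in> B \<inter> F" using bf by simp
    qed
    show "inv b0 \<otimes> fst (b0 \<otimes> c, inv c \<otimes> f0) = c" if "c \<in> B \<inter> F" for c
      using that b0c Bc by (auto simp: m_assoc[symmetric])
    show "(b0 \<otimes> (inv b0 \<otimes> fst q), inv (inv b0 \<otimes> fst q) \<otimes> f0) = q" if q: "q \<in> ?fibre" for q
    proof -
      obtain b f where bf: "q = (b, f)" by (cases q)
      have bfz: "b \<otimes> f = b0 \<otimes> f0" using q bf by auto
      have bc: "b \<in> carrier G" and fc: "f \<in> carrier G" using q bf Bc Fc by auto
      have "inv (inv b0 \<otimes> b) \<otimes> f0 = inv b \<otimes> (b \<otimes> f)"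
        using b0c bc f0c bfz by (simp add: inv_mult_group m_assoc)
      then show ?thesis using bf b0c bc fc by (simp add: m_assoc[symmetric])
    qed
  qed
  then show ?thesis by (simp add: bij_betw_same_card)
qed

lemma (in group) card_set_mult_Int:
  assumes B: "subgroup B G" and F: "subgroup F G" and "finite B" "finite F"
  shows "card B * card F = card (B <#> F) * card (B \<inter> F)"
proof -
  let ?fibre = "\<lambda>z. {q\<in>B \<times> F. fst q \<otimes> snd q = z}"
  have eq: "B \<times> F = (\<Union>z\<in>B <#> F. ?fibre z)" unfolding set_mult_def by fastforce
  have "card (B \<times> F) = (\<Sum>z\<in>B <#> F. card (?fibre z))"
    by (subst eq, rule card_UN_disjoint) (auto simp: set_mult_def assms(3,4))
  also have "\<dots> = (\<Sum>z\<in>B <#> F. card (B \<inter> F))"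
    using card_set_mult_fibre[OF B F] by (intro sum.cong refl) (auto simp: set_mult_def)
  finally show ?thesis by (simp add: card_cartesian_product)
qed

lemma (in group) card_mult_le_card_mult_Int:
  assumes B: "subgroup B G" and F: "subgroup F G" and F': "subgroup F' G"
    and "B \<subseteq> F" "F' \<subseteq> F" "finite F"
  shows "card B * card F' \<le> card F * card (B \<inter> F')"
proof -
  have fin: "finite B" "finite F'" using assms(4-6) finite_subset by blast+
  have "B <#> F' \<subseteq> F" using assms(4,5) subgroup.m_closed[OF F] unfolding set_mult_def by auto
  then have "card (B <#> F') \<le> card F" using card_mono \<open>finite F\<close> by blast
  then show ?thesis using card_set_mult_Int[OF B F' fin] by (metis mult_le_mono1)
qed

lemma (in comm_group) subgroup_image_nat_pow:
  assumes H: "subgroup H G"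
  shows "subgroup ((\<lambda>x. x [^] (n::nat)) ` H) G"
proof (rule subgroupI)
  have Hc: "H \<subseteq> carrier G" using subgroup.subset[OF H] .
  show "(\<lambda>x. x [^] n) ` H \<subseteq> carrier G" using Hc by auto
  show "(\<lambda>x. x [^] n) ` H \<noteq> {}" using subgroup.one_closed[OF H] by blast
  show "inv a \<in> (\<lambda>x. x [^] n) ` H" if "a \<in> (\<lambda>x. x [^] n) ` H" for a
    using that Hc subgroup.m_inv_closed[OF H] by (auto simp: image_iff nat_pow_inv[symmetric] subsetD)
  show "a \<otimes> b \<in> (\<lambda>x. x [^] n) ` H" if "a \<in> (\<lambda>x. x [^] n) ` H" "b \<in> (\<lambda>x. x [^] n) ` H" for a b
    using that Hc subgroup.m_closed[OF H] by (auto simp: nat_pow_distrib[symmetric] subsetD)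
qed

lemma (in comm_group) card_kernel_mult_card_image_nat_pow:
  assumes H: "subgroup H G" and "finite H"
  shows "card H = card {x\<in>H. x [^] n = \<one>} * card ((\<lambda>x. x [^] (n::nat)) ` H)"
proof -
  let ?f = "\<lambda>x. x [^] n"
  have Hc: "H \<subseteq> carrier G" using subgroup.subset[OF H] .
  have eq: "H = (\<Union>y\<in>?f ` H. {x\<in>H. ?f x = y})" by auto
  have "card H = (\<Sum>y\<in>?f ` H. card {x\<in>H. ?f x = y})"
    by (subst eq, rule card_UN_disjoint) (auto simp: \<open>finite H\<close>)
  also have "\<dots> = (\<Sum>y\<in>?f ` H. card {x\<in>H. ?f x = \<one>})"
  proof (rule sum.cong[OF refl])
    fix y assume "y \<in> ?f ` H"
    then obtain h where h: "h \<in> H" "y = ?f h" by auto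
    have hc: "h \<in> carrier G" using h Hc by blast
    have "bij_betw (\<lambda>x. x \<otimes> h) {x\<in>H. ?f x = \<one>} {x\<in>H. ?f x = y}"
    proof (rule bij_betwI[where g = "\<lambda>x. x \<otimes> inv h"])
      show "(\<lambda>x. x \<otimes> h) \<in> {x\<in>H. ?f x = \<one>} \<rightarrow> {x \<in> H. ?f x = y}"
        using h hc Hc by (auto simp: nat_pow_distrib subgroup.m_closed[OF H] subsetD)
      show "(\<lambda>x. x \<otimes> inv h) \<in> {x \<in> H. ?f x = y} \<rightarrow> {x\<in>H. ?f x = \<one>}"
        using h hc Hc
        by (auto simp: nat_pow_distrib nat_pow_inv subgroup.m_closed[OF H]
            subgroup.m_inv_closed[OF H] subsetD)
      show "x \<otimes> h \<otimes> inv h = x" if "x \<in> {x\<in>H. ?f x = \<one>}" for x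
        using that hc Hc by (auto simp: m_assoc subsetD)
      show "x \<otimes> inv h \<otimes> h = x" if "x \<in> {x \<in> H. ?f x = y}" for x
        using that hc Hc by (auto simp: m_assoc subsetD)
    qed
    then show "card {x\<in>H. ?f x = y} = card {x\<in>H. ?f x = \<one>}"
      by (simp add: bij_betw_same_card)
  qed
  finally show ?thesis by (simp add: mult.commute)
qed

lemma (in comm_group) subgroup_nat_pow_mult_extension:
  fixes m :: nat
  assumes Y: "subgroup Y G" and g: "g \<in> carrier G" and "m > 0" and gm: "g [^] m \<in> Y"
  shows "subgroup {g [^] k \<otimes> y | k y. k < m \<and> y \<in> Y} G" (is "subgroup ?Z G")
    and "insert g Y \<subseteq> {g [^] k \<otimes> y | k y. k < m \<and> y \<in> Y}"
proof -
  have Yc: "Y \<subseteq> carrier G" using subgroup.subset[OF Y] .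
  have reduce: "g [^] k \<otimes> y \<in> ?Z" if y: "y \<in> Y" for k :: nat and y
  proof -
    have "g [^] k = g [^] (k mod m) \<otimes> (g [^] m) [^] (k div m)"
      using g by (simp add: nat_pow_pow nat_pow_mult mult.commute)
    then have "g [^] k \<otimes> y = g [^] (k mod m) \<otimes> ((g [^] m) [^] (k div m) \<otimes> y)"
      using g y Yc by (simp add: m_assoc subsetD)
    moreover have "(g [^] m) [^] (k div m) \<otimes> y \<in> Y"
      using subgroup_nat_pow_closed[OF Y gm] y subgroup.m_closed[OF Y] by blast
    ultimately show ?thesis using \<open>m > 0\<close> mod_less_divisor by blast
  qed
  show "subgroup ?Z G"
  proof (rule subgroupI)
    show "?Z \<subseteq> carrier G" using g Yc by auto
    show "?Z \<noteq> {}" using reduce[OF subgroup.one_closed[OF Y]] by blast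
    show "inv a \<in> ?Z" if a: "a \<in> ?Z" for a
    proof -
      obtain k :: nat and y where ky: "a = g [^] k \<otimes> y" "y \<in> Y" using a by blast
      have yc: "y \<in> carrier G" using ky Yc by blast
      have "g [^] ((m - 1) * k) \<otimes> g [^] k = (g [^] m) [^] k"
        using g \<open>m > 0\<close> by (simp add: nat_pow_pow nat_pow_mult algebra_simps)
      then have "inv (g [^] k) = inv ((g [^] m) [^] k) \<otimes> g [^] ((m - 1) * k)"
        using g by (intro inv_equality) (simp_all add: m_assoc)
      then have inv_a: "inv a = g [^] ((m - 1) * k) \<otimes> (inv y \<otimes> inv ((g [^] m) [^] k))"
        using ky g yc by (simp add: inv_mult_group m_ac)
      have "inv y \<otimes> inv ((g [^] m) [^] k) \<in> Y"
        using ky Y gm subgroup_nat_pow_closed subgroup.m_closed subgroup.m_inv_closed by metis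
      then show ?thesis unfolding inv_a by (rule reduce)
    qed
    show "a \<otimes> b \<in> ?Z" if a: "a \<in> ?Z" and b: "b \<in> ?Z" for a b
    proof -
      obtain k :: nat and y where ky: "a = g [^] k \<otimes> y" "y \<in> Y" using a by blast
      obtain k' :: nat and y' where ky': "b = g [^] k' \<otimes> y'" "y' \<in> Y" using b by blast
      have ab: "a \<otimes> b = g [^] (k + k') \<otimes> (y \<otimes> y')"
        using ky ky' g Yc by (simp add: m_ac nat_pow_mult[symmetric] subsetD)
      show ?thesis unfolding ab by (rule reduce) (use ky ky' subgroup.m_closed[OF Y] in blast)
    qed
  qed
  show "insert g Y \<subseteq> ?Z"
    using reduce[OF subgroup.one_closed[OF Y], of 1] reduce[of _ 0] g Yc by (auto simp: subsetD)
qed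

lemma (in comm_group) card_generate_insert_le:
  assumes "finite (carrier G)" and Y: "subgroup Y G" and g: "g \<in> carrier G"
    and "m > 0" and gm: "g [^] m \<in> Y"
  shows "card (generate G (insert g Y)) \<le> m * card Y"
proof -
  define Z where "Z = {g [^] k \<otimes> y | k y. k < m \<and> y \<in> Y}"
  have "generate G (insert g Y) \<subseteq> Z"
    using subgroup_nat_pow_mult_extension[OF assms(2-5), folded Z_def] generate_subgroup_incl
    by blast
  moreover have "Z = (\<lambda>q. g [^] fst q \<otimes> snd q) ` ({..<m} \<times> Y)"
    unfolding Z_def by (auto simp: image_def)
  moreover have "finite ({..<m} \<times> Y)"
    using finite_subset[OF subgroup.subset[OF Y] assms(1)] by blast
  ultimately have "card (generate G (insert g Y)) \<le> card ({..<m} \<times> Y)"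
    using card_mono[of Z] card_image_le[of "{..<m} \<times> Y"] by (metis finite_imageI le_trans)
  then show ?thesis by (simp add: card_cartesian_product)
qed

lemma (in comm_group) card_generate_Un_le:
  assumes "finite (carrier G)" and N: "subgroup N G" and "finite I"
    and t: "\<And>i. i \<in> I \<Longrightarrow> t i \<in> carrier G \<and> m i > 0 \<and> t i [^] m i \<in> N"
  shows "card (generate G (N \<union> t ` I)) \<le> (\<Prod>i\<in>I. m i) * card N"
  using \<open>finite I\<close> t
proof (induction I rule: finite_induct)
  case empty
  have "generate G N = N"
    using generate_subgroup_incl[OF subset_refl N] generate.incl[of _ N G] by blast
  then show ?case by simp
next
  case (insert i I)
  let ?Y = "generate G (N \<union> t ` I)"
  have NtI: "N \<union> t ` I \<subseteq> carrier G" using insert.prems subgroup.subset[OF N] by auto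
  have Y: "subgroup ?Y G" using generate_is_subgroup[OF NtI] .
  have NtY: "N \<union> t ` I \<subseteq> ?Y" using generate.incl[of _ "N \<union> t ` I" G] by blast
  have "N \<union> t ` insert i I \<subseteq> generate G (insert (t i) ?Y)"
    using NtY generate.incl[of _ "insert (t i) ?Y" G] by blast
  moreover have Z: "subgroup (generate G (insert (t i) ?Y)) G"
    using generate_is_subgroup insert.prems subgroup.subset[OF Y] by simp
  ultimately have "generate G (N \<union> t ` insert i I) \<subseteq> generate G (insert (t i) ?Y)"
    using generate_subgroup_incl by blast
  then have "card (generate G (N \<union> t ` insert i I)) \<le> card (generate G (insert (t i) ?Y))"
    using finite_subset[OF subgroup.subset[OF Z] assms(1)] by (rule card_mono[rotated])
  also have "\<dots> \<le> m i * card ?Y"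
  proof (rule card_generate_insert_le[OF assms(1) Y])
    show "t i \<in> carrier G" "0 < m i" using insert.prems by auto
    show "t i [^] m i \<in> ?Y" using insert.prems NtY by blast
  qed
  also have "\<dots> \<le> m i * ((\<Prod>i\<in>I. m i) * card N)" using insert by simp
  finally show ?case using insert.hyps by (simp add: mult.assoc)
qed

section \<open>Finite abelian \<open>p\<close>-groups and their layers\<close>

locale finite_abelian_p_group = comm_group G for G (structure) +
  fixes p \<alpha> :: nat
  assumes finite_carrier: "finite (carrier G)"
    and prime_p: "Factorial_Ring.prime p"
    and card_carrier: "card (carrier G) = p ^ \<alpha>"
begin

lemma p_gt_1: "p > 1"
  using prime_p prime_gt_1_nat by blast

lemma finite_subgroup: "subgroup A G \<Longrightarrow> finite A"
  using finite_carrier subgroup.subset finite_subset by blast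

lemma finite_Collect_subgroup: "finite {H. subgroup H G \<and> P H}"
proof -
  have "{H. subgroup H G \<and> P H} \<subseteq> Pow (carrier G)" using subgroup.subset by blast
  then show ?thesis using finite_carrier finite_subset by blast
qed

lemma card_subgroup_pos: "subgroup A G \<Longrightarrow> card A > 0"
  using finite_subgroup subgroup.one_closed card_gt_0_iff by blast

lemma card_subgroup_eq_power:
  assumes "subgroup A G" shows "\<exists>k\<le>\<alpha>. card A = p ^ k"
  using card_subgroup_dvd[OF assms subgroup_self] subgroup.subset[OF assms]
    divides_primepow_nat[OF prime_p] card_carrier by auto

lemma card_subgroup_eq_power_mult:
  assumes A: "subgroup A G" and B: "subgroup B G" and "A \<subseteq> B"
  shows "\<exists>k. card B = p ^ k * card A"
proof -
  obtain a b where a: "card A = p ^ a" and b: "card B = p ^ b"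
    using card_subgroup_eq_power A B by meson
  have "card A \<le> card B" using card_mono[OF finite_subgroup[OF B] \<open>A \<subseteq> B\<close>] .
  then have "a \<le> b" using a b p_gt_1 by (metis power_le_imp_le_exp)
  then have "card B = p ^ (b - a) * card A" using a b by (simp flip: power_add)
  then show ?thesis by blast
qed

lemma card_psubset_subgroup_ge:
  assumes A: "subgroup A G" and B: "subgroup B G" and "A \<subset> B"
  shows "p * card A \<le> card B"
proof -
  obtain k where k: "card B = p ^ k * card A"
    using card_subgroup_eq_power_mult[OF A B] \<open>A \<subset> B\<close> by blast
  have "card A < card B" using psubset_card_mono[OF finite_subgroup[OF B] \<open>A \<subset> B\<close>] .
  then have "k \<noteq> 0" using k by (cases k) auto
  then have "p ^ 1 \<le> p ^ k" using p_gt_1 by (intro power_increasing) auto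
  then show ?thesis using k by simp
qed

lemma pow_card_carrier_eq_one: "x \<in> carrier G \<Longrightarrow> x [^] (p ^ \<alpha>) = \<one>"
  using pow_order_eq_1[of x] card_carrier by (simp add: order_def)

definition Mho :: "nat \<Rightarrow> 'a set \<Rightarrow> 'a set" where
  "Mho j H = (\<lambda>x. x [^] (p ^ j)) ` H"

lemma subgroup_Mho: "subgroup H G \<Longrightarrow> subgroup (Mho j H) G"
  unfolding Mho_def by (rule subgroup_image_nat_pow)

lemma Mho_subset: "subgroup H G \<Longrightarrow> Mho j H \<subseteq> H"
  unfolding Mho_def using subgroup_nat_pow_closed by blast

lemma Mho_mono: "H \<subseteq> H' \<Longrightarrow> Mho j H \<subseteq> Mho j H'"
  unfolding Mho_def by auto

lemma Mho_0: "H \<subseteq> carrier G \<Longrightarrow> Mho 0 H = H"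
  unfolding Mho_def by (auto simp: subset_iff)

lemma Mho_Mho: "H \<subseteq> carrier G \<Longrightarrow> Mho i (Mho j H) = Mho (j + i) H"
  unfolding Mho_def image_image by (intro image_cong) (auto simp: nat_pow_pow power_add subsetD)

lemma Mho_card_exponent:
  assumes "subgroup H G" shows "Mho \<alpha> H = {\<one>}"
proof -
  have "x [^] (p ^ \<alpha>) = \<one>" if "x \<in> H" for x
    using that subgroup.subset[OF assms] pow_card_carrier_eq_one by blast
  then show ?thesis unfolding Mho_def using subgroup.one_closed[OF assms] by force
qed

abbreviation \<Omega> :: "nat \<Rightarrow> 'a set" where
  "\<Omega> i \<equiv> Omega G p i"

lemma Int_Omega_eq: "H \<subseteq> carrier G \<Longrightarrow> H \<inter> \<Omega> j = {x\<in>H. x [^] (p ^ j) = \<one>}"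
  unfolding Omega_def by auto

lemma subgroup_Omega: "subgroup (\<Omega> i) G"
proof (rule subgroupI)
  show "inv a \<in> \<Omega> i" if "a \<in> \<Omega> i" for a
    using that by (auto simp: Omega_def nat_pow_inv)
  show "a \<otimes> b \<in> \<Omega> i" if "a \<in> \<Omega> i" "b \<in> \<Omega> i" for a b
    using that by (auto simp: Omega_def nat_pow_distrib)
qed (use one_closed in \<open>auto simp: Omega_def\<close>)

lemma Omega_mono: "i \<le> j \<Longrightarrow> \<Omega> i \<subseteq> \<Omega> j"
  by (auto simp: Omega_def le_iff_add power_add nat_pow_pow[symmetric])

lemma Omega_0: "\<Omega> 0 = {\<one>}"
  by (auto simp: Omega_def)

lemma Omega_card_exponent: "\<alpha> \<le> i \<Longrightarrow> \<Omega> i = carrier G"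
  using Omega_mono[of \<alpha> i] pow_card_carrier_eq_one by (auto simp: Omega_def)

lemma card_Int_Omega_mult_card_Mho:
  "subgroup H G \<Longrightarrow> card H = card (H \<inter> \<Omega> j) * card (Mho j H)"
  unfolding Mho_def Int_Omega_eq[OF subgroup.subset]
  using card_kernel_mult_card_image_nat_pow finite_subgroup by blast

lemma Mho_Omega_Suc: "Mho k (\<Omega> (Suc k)) = \<Omega> 1 \<inter> Mho k (carrier G)"
proof
  show "Mho k (\<Omega> (Suc k)) \<subseteq> \<Omega> 1 \<inter> Mho k (carrier G)"
    by (auto simp: Mho_def Omega_def nat_pow_pow mult.commute)
  show "\<Omega> 1 \<inter> Mho k (carrier G) \<subseteq> Mho k (\<Omega> (Suc k))"
    by (auto simp: Mho_def Omega_def nat_pow_pow mult.commute)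
qed

lemma card_Omega_Suc: "card (\<Omega> (Suc k)) = card (\<Omega> k) * card (\<Omega> 1 \<inter> Mho k (carrier G))"
proof -
  have "\<Omega> (Suc k) \<inter> \<Omega> k = \<Omega> k" using Omega_mono[of k "Suc k"] by auto
  then show ?thesis
    using card_Int_Omega_mult_card_Mho[OF subgroup_Omega, of "Suc k" k] Mho_Omega_Suc by simp
qed

lemma card_Omega_Int_Mho: "card (\<Omega> 1 \<inter> Mho k (carrier G)) = p ^ layer G p (Suc k)"
proof -
  let ?E = "\<Omega> 1 \<inter> Mho k (carrier G)"
  have E: "subgroup ?E G" by (intro subgroups_Inter_pair subgroup_Omega subgroup_Mho subgroup_self)
  have "card (rcosets\<^bsub>G\<lparr>carrier := \<Omega> (Suc k)\<rparr>\<^esub> \<Omega> k) * card (\<Omega> k) = card (\<Omega> k) * card ?E"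
    using card_rcosets_subgroup[OF subgroup_Omega subgroup_Omega Omega_mono] card_Omega_Suc by simp
  then have "order ((G\<lparr>carrier := \<Omega> (Suc k)\<rparr>) Mod (\<Omega> k)) = card ?E"
    using card_subgroup_pos[OF subgroup_Omega, of k] by (simp add: FactGroup_def order_def)
  moreover obtain j where "card ?E = p ^ j" using card_subgroup_eq_power[OF E] by blast
  ultimately show ?thesis
    using prime_p by (simp add: layer_def prime_elem_multiplicity_power_distrib)
qed

lemma card_Omega: "card (\<Omega> i) = p ^ (\<Sum>k=1..i. layer G p k)"
proof (induction i)
  case 0 then show ?case by (simp add: Omega_0)
next
  case (Suc i)
  then show ?case using card_Omega_Suc card_Omega_Int_Mho by (simp add: power_add)
qed

lemma sum_layer: "(\<Sum>k=1..\<alpha>. layer G p k) = \<alpha>"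
  using card_Omega[of \<alpha>] Omega_card_exponent card_carrier p_gt_1 by (simp add: power_inject_exp)

lemma layer_eq_0: "\<alpha> < k \<Longrightarrow> layer G p k = 0"
proof -
  assume "\<alpha> < k"
  then obtain j where j: "k = Suc j" "\<alpha> \<le> j" by (cases k) auto
  then have "card (\<Omega> 1 \<inter> Mho j (carrier G)) = 1"
    using card_Omega_Suc[of j] Omega_card_exponent card_subgroup_pos[OF subgroup_Omega, of j] by simp
  then show ?thesis using card_Omega_Int_Mho j p_gt_1 by simp
qed

lemma layer_antimono:
  assumes "1 \<le> k" "k \<le> k'" shows "layer G p k' \<le> layer G p k"
proof -
  obtain j where k: "k = Suc j" using assms(1) by (cases k) auto
  obtain j' where k': "k' = Suc j'" using assms by (cases k') auto
  then have "Mho j' (carrier G) = Mho (j' - j) (Mho j (carrier G))"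
    using Mho_Mho[of "carrier G" "j' - j" j] assms k k' by simp
  also have "\<dots> \<subseteq> Mho j (carrier G)" by (rule Mho_subset[OF subgroup_Mho[OF subgroup_self]])
  finally have "\<Omega> 1 \<inter> Mho j' (carrier G) \<subseteq> \<Omega> 1 \<inter> Mho j (carrier G)" by blast
  then have "card (\<Omega> 1 \<inter> Mho j' (carrier G)) \<le> card (\<Omega> 1 \<inter> Mho j (carrier G))"
    using finite_subgroup[OF subgroups_Inter_pair[OF subgroup_Omega subgroup_Mho[OF subgroup_self]]]
    by (rule card_mono[rotated])
  then show ?thesis using card_Omega_Int_Mho k k' p_gt_1 by simp
qed

lemma card_carrier_eq_powr: "real (card (carrier G)) = real p powr (\<Sum>i=1..\<alpha>. real (layer G p i))"
proof -
  have "real p powr (\<Sum>i=1..\<alpha>. real (layer G p i)) = real p powr real \<alpha>"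
    using sum_layer by (metis of_nat_sum)
  also have "\<dots> = real (card (carrier G))" using card_carrier p_gt_1 by (simp add: powr_realpow)
  finally show ?thesis by simp
qed

lemma prod_layer_powr_eq:
  "(\<Prod>i\<in>{i. 1 \<le> i \<and> layer G p i \<noteq> 0}. real p powr (real (layer G p i) ^ 2 / 4))
    = (\<Prod>i=1..\<alpha>. real p powr (real (layer G p i) ^ 2 / 4))"
proof (rule prod.mono_neutral_left)
  show "{i. 1 \<le> i \<and> layer G p i \<noteq> 0} \<subseteq> {1..\<alpha>}"
  proof
    fix i assume i: "i \<in> {i. 1 \<le> i \<and> layer G p i \<noteq> 0}"
    then have "i \<le> \<alpha>" using layer_eq_0[of i] by (cases "\<alpha> < i") auto
    then show "i \<in> {1..\<alpha>}" using i by simp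
  qed
  show "\<forall>i\<in>{1..\<alpha>} - {i. 1 \<le> i \<and> layer G p i \<noteq> 0}. real p powr (real (layer G p i) ^ 2 / 4) = 1"
    using p_gt_1 by simp
qed simp

section \<open>The lower bound\<close>

lemma card_generate_Int_Omega_le:
  assumes "finite I" and t: "\<And>i. i \<in> I \<Longrightarrow> t i \<in> \<Omega> (c i)"
  shows "card (generate G (t ` I) \<inter> \<Omega> j) \<le> p ^ (\<Sum>i\<in>I. min (c i) j)"
proof -
  let ?H = "generate G (t ` I)"
  have tc: "t ` I \<subseteq> carrier G" using t by (auto simp: Omega_def)
  have H: "subgroup ?H G" using generate_is_subgroup[OF tc] .
  have tH: "t ` I \<subseteq> ?H" using generate.incl[of _ "t ` I" G] by blast
  have "generate G (Mho j ?H \<union> t ` I) \<subseteq> ?H"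
    using Mho_subset[OF H] tH by (intro generate_subgroup_incl[OF _ H]) blast
  moreover have "?H \<subseteq> generate G (Mho j ?H \<union> t ` I)" by (intro mono_generate) blast
  ultimately have eq: "generate G (Mho j ?H \<union> t ` I) = ?H" by blast
  have pow: "t i [^] (p ^ min (c i) j) \<in> Mho j ?H" if "i \<in> I" for i
  proof (cases "c i \<le> j")
    case True
    then show ?thesis using t[OF that] subgroup.one_closed[OF subgroup_Mho[OF H]]
      by (simp add: Omega_def min_def)
  next
    case False
    have "t i \<in> ?H" using tH that by blast
    then show ?thesis using False unfolding Mho_def min_def by simp
  qed
  have "card (generate G (Mho j ?H \<union> t ` I)) \<le> (\<Prod>i\<in>I. p ^ min (c i) j) * card (Mho j ?H)"
    by (rule card_generate_Un_le[OF finite_carrier subgroup_Mho[OF H] \<open>finite I\<close>])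
      (use pow tc p_gt_1 in auto)
  then have "card ?H \<le> (\<Prod>i\<in>I. p ^ min (c i) j) * card (Mho j ?H)" unfolding eq .
  then have "card (?H \<inter> \<Omega> j) * card (Mho j ?H) \<le> p ^ (\<Sum>i\<in>I. min (c i) j) * card (Mho j ?H)"
    using card_Int_Omega_mult_card_Mho[OF H, of j] by (simp add: power_sum)
  then show ?thesis using card_subgroup_pos[OF subgroup_Mho[OF H]] by simp
qed

lemma card_generating_tuples_le:
  assumes "finite I"
  shows "card {t\<in>\<Pi>\<^sub>E i\<in>I. \<Omega> (c i). generate G (t ` I) = H} \<le> p ^ (\<Sum>i\<in>I. \<Sum>i'\<in>I. min (c i') (c i))"
proof (cases "{t\<in>\<Pi>\<^sub>E i\<in>I. \<Omega> (c i). generate G (t ` I) = H} = {}")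
  case False
  then obtain t0 where t0: "t0 \<in> (\<Pi>\<^sub>E i\<in>I. \<Omega> (c i))" "generate G (t0 ` I) = H" by blast
  have "{t\<in>\<Pi>\<^sub>E i\<in>I. \<Omega> (c i). generate G (t ` I) = H} \<subseteq> (\<Pi>\<^sub>E i\<in>I. H \<inter> \<Omega> (c i))"
  proof
    fix t assume t: "t \<in> {t\<in>\<Pi>\<^sub>E i\<in>I. \<Omega> (c i). generate G (t ` I) = H}"
    then have "t ` I \<subseteq> H" using generate.incl[of _ "t ` I" G] by blast
    with t show "t \<in> (\<Pi>\<^sub>E i\<in>I. H \<inter> \<Omega> (c i))" unfolding PiE_iff by blast
  qed
  moreover have "finite (\<Pi>\<^sub>E i\<in>I. H \<inter> \<Omega> (c i))"
    by (rule finite_PiE[OF assms]) (simp add: finite_subgroup[OF subgroup_Omega])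
  ultimately have "card {t\<in>\<Pi>\<^sub>E i\<in>I. \<Omega> (c i). generate G (t ` I) = H}
      \<le> card (\<Pi>\<^sub>E i\<in>I. H \<inter> \<Omega> (c i))"
    by (rule card_mono[rotated])
  also have "\<dots> = (\<Prod>i\<in>I. card (H \<inter> \<Omega> (c i)))" by (rule card_PiE[OF assms])
  also have "\<dots> \<le> (\<Prod>i\<in>I. p ^ (\<Sum>i'\<in>I. min (c i') (c i)))"
    using card_generate_Int_Omega_le[OF assms, of t0 c] t0 by (intro prod_mono) auto
  finally show ?thesis by (simp add: power_sum)
qed (simp only: card.empty zero_le)

lemma card_PiE_Omega_le_card_Sub:
  assumes "finite I"
  shows "(\<Prod>i\<in>I. card (\<Omega> (c i))) \<le> card (Sub G) * p ^ (\<Sum>i\<in>I. \<Sum>i'\<in>I. min (c i') (c i))"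
proof -
  let ?T = "\<Pi>\<^sub>E i\<in>I. \<Omega> (c i)"
  let ?fibre = "\<lambda>H. {t\<in>?T. generate G (t ` I) = H}"
  have finite_Sub: "finite (Sub G)" unfolding Sub_def using finite_Collect_subgroup[of "\<lambda>_. True"] by simp
  have cover: "?T \<subseteq> (\<Union>H\<in>Sub G. ?fibre H)"
  proof
    fix t assume t: "t \<in> ?T"
    then have "t ` I \<subseteq> carrier G" by (auto simp: Omega_def PiE_def Pi_def)
    then show "t \<in> (\<Union>H\<in>Sub G. ?fibre H)" using t generate_is_subgroup by (auto simp: Sub_def)
  qed
  have "finite ?T" by (rule finite_PiE[OF assms]) (rule finite_subgroup[OF subgroup_Omega])
  then have finite_fibre: "finite (?fibre H)" for H by (rule finite_subset[rotated]) blast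
  have "card ?T \<le> card (\<Union>H\<in>Sub G. ?fibre H)"
    using cover by (intro card_mono finite_UN_I finite_Sub finite_fibre)
  also have "\<dots> \<le> (\<Sum>H\<in>Sub G. card (?fibre H))" by (rule card_UN_le[OF finite_Sub])
  also have "\<dots> \<le> (\<Sum>H\<in>Sub G. p ^ (\<Sum>i\<in>I. \<Sum>i'\<in>I. min (c i') (c i)))"
    using card_generating_tuples_le[OF assms] by (rule sum_mono)
  finally show ?thesis using assms by (simp add: card_PiE)
qed

lemma card_Sub_ge_nat:
  defines "R \<equiv> \<lambda>k. layer G p k div 2"
  shows "p ^ (\<Sum>k=1..\<alpha>. layer G p k * R k) \<le> card (Sub G) * p ^ (\<Sum>k=1..\<alpha>. R k * R k)"
proof -
  define L where "L s = {k\<in>{1..\<alpha>}. s < R k}" for s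
  define c where "c s = card (L s)" for s
  have R_le: "R k \<le> R 1" if "k \<in> {1..\<alpha>}" for k
    using that layer_antimono unfolding R_def by (simp add: div_le_mono)
  have level: "L s = {1..c s}" for s
    unfolding L_def c_def using layer_antimono unfolding R_def
    by (intro Collect_antimono_eq_atLeastAtMost) (meson div_le_mono order_less_le_trans)
  have "(\<Prod>s<R 1. card (\<Omega> (c s))) = p ^ (\<Sum>s<R 1. \<Sum>k\<in>L s. layer G p k)"
    by (simp add: card_Omega level power_sum)
  also have "\<dots> = p ^ (\<Sum>k=1..\<alpha>. layer G p k * R k)"
    unfolding L_def using sum_conjugate_eq[of "{1..\<alpha>}" R "R 1" "layer G p"] R_le by simp
  finally have "p ^ (\<Sum>k=1..\<alpha>. layer G p k * R k)
      \<le> card (Sub G) * p ^ (\<Sum>s<R 1. \<Sum>s'<R 1. min (c s') (c s))"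
    using card_PiE_Omega_le_card_Sub[of "{..<R 1}" c] by simp
  moreover have "min (c s') (c s) = card {k\<in>{1..\<alpha>}. s < R k \<and> s' < R k}" for s s'
  proof -
    have "min (c s') (c s) = card ({1..c s'} \<inter> {1..c s})" by (simp add: min_def)
    also have "{1..c s'} \<inter> {1..c s} = {k\<in>{1..\<alpha>}. s < R k \<and> s' < R k}"
      unfolding level[symmetric] L_def by blast
    finally show ?thesis .
  qed
  ultimately show ?thesis using sum_card_conjugate_eq[of "{1..\<alpha>}" R "R 1"] R_le by simp
qed

lemma card_Sub_ge:
  "inverse (real (card (carrier G))) * (\<Prod>i=1..\<alpha>. real p powr (real (layer G p i) ^ 2 / 4))
    \<le> real (card (Sub G))"
proof -
  let ?l = "layer G p" let ?R = "\<lambda>k. ?l k div 2"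
  let ?A = "\<Sum>k=1..\<alpha>. ?l k * ?R k" and ?B = "\<Sum>k=1..\<alpha>. ?R k * ?R k"
  have pk: "real p ^ k = real p powr real k" for k using p_gt_1 by (simp add: powr_realpow)
  have "real (p ^ ?A) \<le> real (card (Sub G) * p ^ ?B)" using card_Sub_ge_nat by (rule of_nat_mono)
  then have "real p powr real ?A \<le> real (card (Sub G)) * real p powr real ?B"
    unfolding of_nat_mult of_nat_power pk .
  then have card_ge: "real p powr (real ?A - real ?B) \<le> real (card (Sub G))"
    using p_gt_1 by (simp add: powr_diff divide_le_eq)
  have "(\<Sum>i=1..\<alpha>. real (?l i) ^ 2 / 4 - real (?l i)) \<le> real ?A - real ?B"
    using quarter_square_minus_le by (simp add: sum_subtractf[symmetric] power2_eq_square sum_mono)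
  then have "real p powr (\<Sum>i=1..\<alpha>. real (?l i) ^ 2 / 4 - real (?l i)) \<le> real p powr (real ?A - real ?B)"
    using p_gt_1 by (intro powr_mono) auto
  then have "real p powr (\<Sum>i=1..\<alpha>. real (?l i) ^ 2 / 4 - real (?l i)) \<le> real (card (Sub G))"
    using card_ge by (rule order_trans)
  moreover have "real p powr (\<Sum>i=1..\<alpha>. real (?l i) ^ 2 / 4 - real (?l i))
      = real p powr (\<Sum>i=1..\<alpha>. real (?l i) ^ 2 / 4) / real p powr (\<Sum>i=1..\<alpha>. real (?l i))"
    by (simp only: sum_subtractf powr_diff)
  moreover have "\<dots> = (\<Prod>i=1..\<alpha>. real p powr (real (?l i) ^ 2 / 4)) / real (card (carrier G))"
    using p_gt_1 by (simp add: powr_sum card_carrier_eq_powr)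
  ultimately have "(\<Prod>i=1..\<alpha>. real p powr (real (?l i) ^ 2 / 4)) / real (card (carrier G))
      \<le> real (card (Sub G))" by linarith
  then show ?thesis by (simp only: divide_inverse mult.commute)
qed

section \<open>Subgroups of an elementary abelian subgroup\<close>

definition subgroups_between :: "'a set \<Rightarrow> 'a set \<Rightarrow> nat \<Rightarrow> 'a set set" where
  "subgroups_between D F k = {B. subgroup B G \<and> D \<subseteq> B \<and> B \<subseteq> F \<and> card B = k}"

lemma finite_subgroups_between: "finite (subgroups_between D F k)"
  unfolding subgroups_between_def using finite_Collect_subgroup by simp

lemma card_subgroups_between_card_le: "card (subgroups_between D F (card D)) \<le> 1"
proof -
  have "subgroups_between D F (card D) \<subseteq> {D}"
  proof
    fix B assume "B \<in> subgroups_between D F (card D)"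
    then have "subgroup B G" "D \<subseteq> B" "card D = card B" unfolding subgroups_between_def by auto
    then show "B \<in> {D}" using card_subset_eq[OF finite_subgroup] by blast
  qed
  then have "card (subgroups_between D F (card D)) \<le> card {D}" by (rule card_mono[rotated]) simp
  then show ?thesis by simp
qed

lemma subgroups_between_eq_empty:
  assumes "subgroup F G" "card F < k" shows "subgroups_between D F k = {}"
proof -
  have "\<not> (B \<subseteq> F \<and> card B = k)" for B
    using card_mono[OF finite_subgroup[OF assms(1)], of B] assms(2) by linarith
  then show ?thesis unfolding subgroups_between_def by blast
qed

lemma exists_subgroup_between:
  assumes D: "subgroup D G" and F: "subgroup F G" and "D \<subseteq> F" and "F \<subseteq> \<Omega> 1"
    and cD: "card D = p ^ d" and cF: "card F = p ^ (d + n)"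
  shows "j \<le> n \<Longrightarrow> \<exists>F'. subgroup F' G \<and> D \<subseteq> F' \<and> F' \<subseteq> F \<and> card F' = p ^ (d + j)"
proof (induction j)
  case 0 then show ?case using assms by auto
next
  case (Suc j)
  then obtain F' where F': "subgroup F' G" "D \<subseteq> F'" "F' \<subseteq> F" "card F' = p ^ (d + j)" by auto
  have "card F' < card F" using F'(4) cF Suc.prems p_gt_1 by simp
  then have "\<not> F \<subseteq> F'" using card_mono[OF finite_subgroup[OF F'(1)]] by (meson not_le)
  then obtain g where g: "g \<in> F" "g \<notin> F'" by blast
  let ?F'' = "generate G (insert g F')"
  have gc: "g \<in> carrier G" using g subgroup.subset[OF F] by blast
  have gp: "g [^] p \<in> F'" using g \<open>F \<subseteq> \<Omega> 1\<close> subgroup.one_closed[OF F'(1)] by (auto simp: Omega_def)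
  have F'': "subgroup ?F'' G" using generate_is_subgroup gc subgroup.subset[OF F'(1)] by simp
  have "F' \<subset> ?F''" using g generate.incl[of _ "insert g F'" G] by blast
  then have "p * card F' \<le> card ?F''" using card_psubset_subgroup_ge[OF F'(1) F''] by blast
  moreover have "card ?F'' \<le> p * card F'"
    using card_generate_insert_le[OF finite_carrier F'(1) gc _ gp] p_gt_1 by simp
  moreover have "?F'' \<subseteq> F" using g F'(3) by (intro generate_subgroup_incl[OF _ F]) blast
  ultimately show ?case using F'(2,4) \<open>F' \<subset> ?F''\<close> F'' by (intro exI[of _ ?F'']) auto
qed

lemma index_p_supergroups_eqI:
  assumes C: "subgroup C G" and B1: "subgroup B1 G" "C \<subseteq> B1" "card B1 = p * card C"
    and B2: "subgroup B2 G" "C \<subseteq> B2" "card B2 = p * card C"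
    and "b \<in> B1 \<inter> B2" "b \<notin> C"
  shows "B1 = B2"
proof -
  have "C \<subset> B1 \<inter> B2" using assms(2-9) by blast
  then have "p * card C \<le> card (B1 \<inter> B2)"
    using card_psubset_subgroup_ge[OF C subgroups_Inter_pair[OF B1(1) B2(1)]] by blast
  moreover have "card (B1 \<inter> B2) \<le> card B1" "card (B1 \<inter> B2) \<le> card B2"
    using finite_subgroup B1(1) B2(1) card_mono by (meson inf_le1 inf_le2)+
  ultimately have "card (B1 \<inter> B2) = card B1" "card (B1 \<inter> B2) = card B2" using B1(3) B2(3) by auto
  then show "B1 = B2"
    using card_subset_eq finite_subgroup B1(1) B2(1) by (metis inf_le1 inf_le2)
qed

text \<open>A subgroup \<open>B\<close> of index \<open>p\<close> over \<open>C\<close> is determined by the coset modulo \<open>C\<close> of any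
  element of \<open>B - C\<close>.\<close>

lemma card_subgroups_Int_eq_le:
  assumes C: "subgroup C G" and F: "subgroup F G" and "C \<subseteq> F"
  shows "card {B. subgroup B G \<and> B \<subseteq> F \<and> B \<inter> F' = C \<and> card B = p * card C} \<le> card F div card C"
proof -
  let ?Y = "{B. subgroup B G \<and> B \<subseteq> F \<and> B \<inter> F' = C \<and> card B = p * card C}"
  have nonempty: "\<exists>b. b \<in> B - C" if "B \<in> ?Y" for B
  proof -
    have "C \<subseteq> B" "card B = p * card C" using that by auto
    moreover have "p * card C \<noteq> card C" using card_subgroup_pos[OF C] p_gt_1 by simp
    ultimately have "B \<noteq> C" by auto
    with \<open>C \<subseteq> B\<close> show ?thesis by blast
  qed
  define r where "r B = (SOME b. b \<in> B - C)" for B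
  have r: "r B \<in> B - C" if "B \<in> ?Y" for B
    unfolding r_def using someI_ex[OF nonempty[OF that]] .
  have "inj_on (\<lambda>B. C #> r B) ?Y"
  proof (rule inj_onI)
    fix B1 B2 assume B1: "B1 \<in> ?Y" and B2: "B2 \<in> ?Y" and eq: "C #> r B1 = C #> r B2"
    have B1': "subgroup B1 G" "C \<subseteq> B1" "card B1 = p * card C" using B1 by auto
    have B2': "subgroup B2 G" "C \<subseteq> B2" "card B2 = p * card C" using B2 by auto
    have rB1: "r B1 \<in> B1" and rB2: "r B2 \<in> B2 - C" using r[OF B1] r[OF B2] by blast+
    have "r B2 \<in> C #> r B2"
      using subgroup.one_closed[OF C] rB2 subgroup.subset[OF B2'(1)] unfolding r_coset_def by force
    then have "r B2 \<in> C #> r B1" by (simp only: eq)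
    then obtain c where "c \<in> C" "r B2 = c \<otimes> r B1" unfolding r_coset_def by blast
    then have "r B2 \<in> B1" using rB1 B1'(2) subgroup.m_closed[OF B1'(1)] by auto
    then have "r B2 \<in> B1 \<inter> B2" "r B2 \<notin> C" using rB2 by auto
    then show "B1 = B2" by (rule index_p_supergroups_eqI[OF C B1' B2'])
  qed
  moreover have "(\<lambda>B. C #> r B) ` ?Y \<subseteq> rcosets\<^bsub>G\<lparr>carrier := F\<rparr>\<^esub> C"
  proof
    fix R assume "R \<in> (\<lambda>B. C #> r B) ` ?Y"
    then obtain B where "B \<in> ?Y" "R = C #> r B" by blast
    moreover from \<open>B \<in> ?Y\<close> have "r B \<in> F" using r by blast
    ultimately show "R \<in> rcosets\<^bsub>G\<lparr>carrier := F\<rparr>\<^esub> C"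
      unfolding mem_rcosets_subgroup_iff by blast
  qed
  moreover have "finite (rcosets\<^bsub>G\<lparr>carrier := F\<rparr>\<^esub> C)"
    unfolding RCOSETS_def using finite_subgroup[OF F] by simp
  ultimately have "card ?Y \<le> card (rcosets\<^bsub>G\<lparr>carrier := F\<rparr>\<^esub> C)" using card_inj_on_le by blast
  then show ?thesis
    using card_rcosets_subgroup_eq_div[OF C F \<open>C \<subseteq> F\<close> finite_subgroup[OF C]] by simp
qed

lemma card_subgroups_between_le_split:
  assumes D: "subgroup D G" and F: "subgroup F G" and F': "subgroup F' G"
    and "D \<subseteq> F'" "F' \<subseteq> F" and idx: "card F = p * card F'"
  shows "card (subgroups_between D F (p * k))
    \<le> card (subgroups_between D F' (p * k)) + card (subgroups_between D F' k) * (card F div k)"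
proof -
  let ?Y = "\<lambda>C. {B. subgroup B G \<and> B \<subseteq> F \<and> B \<inter> F' = C \<and> card B = p * card C}"
  have cover: "subgroups_between D F (p * k)
      \<subseteq> subgroups_between D F' (p * k) \<union> (\<Union>C\<in>subgroups_between D F' k. ?Y C)"
  proof
    fix B assume B: "B \<in> subgroups_between D F (p * k)"
    show "B \<in> subgroups_between D F' (p * k) \<union> (\<Union>C\<in>subgroups_between D F' k. ?Y C)"
    proof (cases "B \<subseteq> F'")
      case True then show ?thesis using B unfolding subgroups_between_def by auto
    next
      case False
      have sB: "subgroup B G" "D \<subseteq> B" "B \<subseteq> F" "card B = p * k"
        using B unfolding subgroups_between_def by auto
      have sC: "subgroup (B \<inter> F') G" using subgroups_Inter_pair[OF sB(1) F'] .
      have "card B * card F' \<le> p * card F' * card (B \<inter> F')"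
        using card_mult_le_card_mult_Int[OF sB(1) F F' sB(3) \<open>F' \<subseteq> F\<close> finite_subgroup[OF F]] idx
        by simp
      then have "card B \<le> p * card (B \<inter> F')" using card_subgroup_pos[OF F'] by simp
      moreover have "p * card (B \<inter> F') \<le> card B"
        using False card_psubset_subgroup_ge[OF sC sB(1)] by blast
      ultimately have "card B = p * card (B \<inter> F')" by simp
      then have "B \<inter> F' \<in> subgroups_between D F' k" "B \<in> ?Y (B \<inter> F')"
        using sB sC \<open>D \<subseteq> F'\<close> p_gt_1 unfolding subgroups_between_def by auto
      then show ?thesis by blast
    qed
  qed
  have "card (subgroups_between D F (p * k))
      \<le> card (subgroups_between D F' (p * k)) + card (\<Union>C\<in>subgroups_between D F' k. ?Y C)"
    using card_mono[OF _ cover] card_Un_le finite_subgroups_between finite_Collect_subgroup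
    by (meson finite_UN_I finite_UnI order_trans)
  also have "card (\<Union>C\<in>subgroups_between D F' k. ?Y C) \<le> (\<Sum>C\<in>subgroups_between D F' k. card (?Y C))"
    by (rule card_UN_le[OF finite_subgroups_between])
  also have "\<dots> \<le> (\<Sum>C\<in>subgroups_between D F' k. card F div k)"
  proof (rule sum_mono)
    fix C assume "C \<in> subgroups_between D F' k"
    then show "card (?Y C) \<le> card F div k"
      using card_subgroups_Int_eq_le[of C F F'] \<open>F' \<subseteq> F\<close> F unfolding subgroups_between_def by auto
  qed
  finally show ?thesis by simp
qed

text \<open>Here \<open>F/D\<close> is an \<open>s\<close>-dimensional \<open>\<bbbF>\<^sub>p\<close>-space and the bound is a crude form of
  the Gaussian binomial coefficient, obtained by splitting along a hyperplane \<open>F' \<supseteq> D\<close> of \<open>F\<close>.\<close>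

lemma card_subgroups_between_le:
  assumes D: "subgroup D G" and cD: "card D = p ^ d"
  shows "subgroup F G \<Longrightarrow> D \<subseteq> F \<Longrightarrow> F \<subseteq> \<Omega> 1 \<Longrightarrow> card F = p ^ (d + s) \<Longrightarrow>
    card (subgroups_between D F (p ^ (d + t))) \<le> (s choose t) * p ^ (t * (s - t) + t)"
proof (induction s arbitrary: F t)
  case 0
  show ?case
  proof (cases t)
    case 0
    then show ?thesis using card_subgroups_between_card_le[of D F] cD by simp
  next
    case (Suc u)
    then have "card F < p ^ (d + t)"
      using "0.prems"(4) p_gt_1 by (simp del: power_Suc add: power_strict_increasing)
    then show ?thesis using subgroups_between_eq_empty[OF "0.prems"(1)] by simp
  qed
next
  case (Suc s)
  note F = Suc.prems(1) and cF = Suc.prems(4)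
  obtain F' where F': "subgroup F' G" "D \<subseteq> F'" "F' \<subseteq> F" "card F' = p ^ (d + s)"
    using exists_subgroup_between[OF D F Suc.prems(2,3) cD cF, of s] by auto
  have F'1: "F' \<subseteq> \<Omega> 1" using F'(3) Suc.prems(3) by blast
  show ?case
  proof (cases t)
    case 0
    then show ?thesis using card_subgroups_between_card_le[of D F] cD by simp
  next
    case (Suc u)
    show ?thesis
    proof (cases "u \<le> s")
      case False
      then have "card F < p ^ (d + t)"
        using cF Suc p_gt_1 by (simp del: power_Suc add: power_strict_increasing)
      then show ?thesis using subgroups_between_eq_empty[OF F] by simp
    next
      case True
      have "d + Suc s = (Suc s - u) + (d + u)" using True by simp
      then have "card F = p ^ (Suc s - u) * p ^ (d + u)" using cF by (metis power_add)
      then have "card F div p ^ (d + u) = p ^ (Suc s - u)" using p_gt_1 by simp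
      then have "card (subgroups_between D F (p ^ (d + t)))
          \<le> card (subgroups_between D F' (p ^ (d + t)))
            + card (subgroups_between D F' (p ^ (d + u))) * p ^ (Suc s - u)"
        using card_subgroups_between_le_split[OF D F F'(1,2,3), of "p ^ (d + u)"] cF F'(4) Suc
        by simp
      also have "\<dots> \<le> (s choose t) * p ^ (t * (s - t) + t)
          + (s choose u) * p ^ (u * (s - u) + u) * p ^ (Suc s - u)"
        using Suc.IH[OF F'(1,2) F'1 F'(4), of t] Suc.IH[OF F'(1,2) F'1 F'(4), of u]
        by (intro add_mono mult_le_mono1)
      also have "\<dots> \<le> (Suc s choose t) * p ^ (t * (Suc s - t) + t)"
        using binomial_power_recurrence_le[OF _ True] p_gt_1 Suc by simp
      finally show ?thesis .
    qed
  qed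
qed

lemma subgroups_above_eq_UN_subgroups_between:
  assumes D: "subgroup D G" and E: "subgroup E G" and cD: "card D = p ^ d" and cE: "card E = p ^ (d + n)"
  shows "{A. subgroup A G \<and> D \<subseteq> A \<and> A \<subseteq> E} = (\<Union>t\<le>n. subgroups_between D E (p ^ (d + t)))"
proof (intro equalityI subsetI)
  fix A assume "A \<in> {A. subgroup A G \<and> D \<subseteq> A \<and> A \<subseteq> E}"
  then have A: "subgroup A G" "D \<subseteq> A" "A \<subseteq> E" by auto
  obtain k where k: "card A = p ^ k * card D" using card_subgroup_eq_power_mult[OF D A(1,2)] by blast
  have "card A \<le> card E" using card_mono[OF finite_subgroup[OF E] A(3)] .
  then have "p ^ (d + k) \<le> p ^ (d + n)" using k cD cE by (simp add: power_add mult.commute)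
  then have "k \<le> n" using p_gt_1 power_le_imp_le_exp by fastforce
  moreover have "card A = p ^ (d + k)" using k cD by (simp add: power_add mult.commute)
  ultimately show "A \<in> (\<Union>t\<le>n. subgroups_between D E (p ^ (d + t)))"
    unfolding subgroups_between_def using A by blast
qed (auto simp: subgroups_between_def)

lemma sum_index_power_le:
  assumes D: "subgroup D G" and E: "subgroup E G" and "D \<subseteq> E" and "E \<subseteq> \<Omega> 1"
    and cD: "card D = p ^ d" and cE: "card E = p ^ (d + n)" and "m \<le> d"
  shows "(\<Sum>A\<in>{A. subgroup A G \<and> D \<subseteq> A \<and> A \<subseteq> E}. (card E div card A) ^ m)
    \<le> (\<Sum>t\<le>n. (n choose t) * p ^ (t * (n - t) + t) * p ^ ((n - t) * d))"
proof -
  have "(\<Sum>A\<in>{A. subgroup A G \<and> D \<subseteq> A \<and> A \<subseteq> E}. (card E div card A) ^ m)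
      = (\<Sum>t\<le>n. \<Sum>A\<in>subgroups_between D E (p ^ (d + t)). (card E div card A) ^ m)"
    unfolding subgroups_above_eq_UN_subgroups_between[OF D E cD cE] using p_gt_1
    by (intro sum.UNION_disjoint finite_atMost ballI finite_subgroups_between)
      (auto simp: subgroups_between_def)
  also have "\<dots> \<le> (\<Sum>t\<le>n. card (subgroups_between D E (p ^ (d + t))) * p ^ ((n - t) * d))"
  proof (intro sum_mono)
    fix t assume t: "t \<in> {..n}"
    have "(card E div card A) ^ m \<le> p ^ ((n - t) * d)" if "A \<in> subgroups_between D E (p ^ (d + t))" for A
    proof -
      have "card A = p ^ (d + t)" using that unfolding subgroups_between_def by blast
      moreover have "d + n = (n - t) + (d + t)" using t by simp
      ultimately have "card E div card A = p ^ (n - t)" using cE p_gt_1 by (metis power_add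
            div_mult_self_is_m zero_less_power less_trans zero_less_one)
      then have "(card E div card A) ^ m = p ^ ((n - t) * m)" by (simp add: power_mult)
      also have "\<dots> \<le> p ^ ((n - t) * d)" using p_gt_1 \<open>m \<le> d\<close> by (intro power_increasing) auto
      finally show ?thesis .
    qed
    then have "(\<Sum>A\<in>subgroups_between D E (p ^ (d + t)). (card E div card A) ^ m)
        \<le> (\<Sum>A\<in>subgroups_between D E (p ^ (d + t)). p ^ ((n - t) * d))"
      by (rule sum_mono)
    then show "(\<Sum>A\<in>subgroups_between D E (p ^ (d + t)). (card E div card A) ^ m)
        \<le> card (subgroups_between D E (p ^ (d + t))) * p ^ ((n - t) * d)"
      by simp
  qed
  also have "\<dots> \<le> (\<Sum>t\<le>n. (n choose t) * p ^ (t * (n - t) + t) * p ^ ((n - t) * d))"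
    using card_subgroups_between_le[OF D cD E \<open>D \<subseteq> E\<close> \<open>E \<subseteq> \<Omega> 1\<close> cE]
    by (intro sum_mono mult_le_mono1)
  finally show ?thesis .
qed

section \<open>The upper bound\<close>

lemma mem_set_mult_Mho_iff:
  "x \<in> Q <#> Mho j K \<longleftrightarrow> (\<exists>q\<in>Q. \<exists>z\<in>K. x = q \<otimes> z [^] (p ^ j))"
  unfolding set_mult_def Mho_def by blast

lemma subset_set_mult_Mho_iterate:
  assumes K: "subgroup K G" and Q: "subgroup Q G" and KQ: "K \<subseteq> Q <#> Mho 1 K"
  shows "K \<subseteq> Q <#> Mho j K"
proof -
  have Kc: "K \<subseteq> carrier G" and Qc: "Q \<subseteq> carrier G" using K Q subgroup.subset by auto
  show ?thesis
  proof (induction j)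
    case 0
    show ?case
    proof
      fix x assume "x \<in> K"
      then have "x = \<one> \<otimes> x [^] (p ^ 0)" using Kc by auto
      then show "x \<in> Q <#> Mho 0 K"
        unfolding mem_set_mult_Mho_iff using \<open>x \<in> K\<close> subgroup.one_closed[OF Q] by blast
    qed
  next
    case (Suc j)
    show ?case
    proof
      fix x assume "x \<in> K"
      then have "x \<in> Q <#> Mho j K" using Suc by blast
      then obtain q z where qz: "q \<in> Q" "z \<in> K" "x = q \<otimes> z [^] (p ^ j)"
        unfolding mem_set_mult_Mho_iff by blast
      have "z \<in> Q <#> Mho 1 K" using KQ qz(2) by blast
      then obtain q' w where qw: "q' \<in> Q" "w \<in> K" "z = q' \<otimes> w [^] (p ^ 1)"
        unfolding mem_set_mult_Mho_iff by blast
      have c: "q \<in> carrier G" "q' \<in> carrier G" "w \<in> carrier G" using qz qw Kc Qc by auto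
      have "x = (q \<otimes> q' [^] (p ^ j)) \<otimes> w [^] (p ^ Suc j)"
        using qz(3) qw(3) c by (simp add: nat_pow_distrib nat_pow_pow m_assoc mult.commute)
      moreover have "q \<otimes> q' [^] (p ^ j) \<in> Q"
        using qz qw subgroup_nat_pow_closed[OF Q] subgroup.m_closed[OF Q] by blast
      ultimately show "x \<in> Q <#> Mho (Suc j) K" unfolding mem_set_mult_Mho_iff using qw(2) by blast
    qed
  qed
qed

text \<open>The Burnside basis theorem: \<open>\<mho>\<^sub>1(K)\<close> lies in the Frattini subgroup of \<open>K\<close>.
  From \<open>K = Q \<mho>\<^sub>1(K)\<close> one gets \<open>K = Q \<mho>\<^sub>j(K)\<close> for all \<open>j\<close>, and \<open>\<mho>\<^sub>\<alpha>(K)\<close> is trivial.\<close>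

lemma subset_of_subset_generate_Mho_Un:
  assumes K: "subgroup K G" and Q: "subgroup Q G"
    and gen: "K \<subseteq> generate G (Mho 1 K \<union> Q)"
  shows "K \<subseteq> Q"
proof -
  have Kc: "K \<subseteq> carrier G" and Qc: "Q \<subseteq> carrier G" using K Q subgroup.subset by auto
  have Z: "subgroup (Q <#> Mho 1 K) G" using mult_subgroups[OF Q subgroup_Mho[OF K]] .
  have "Mho 1 K \<union> Q \<subseteq> Q <#> Mho 1 K"
  proof
    fix x assume "x \<in> Mho 1 K \<union> Q"
    then consider z where "z \<in> K" "x = z [^] (p ^ 1)" | "x \<in> Q" unfolding Mho_def by blast
    then show "x \<in> Q <#> Mho 1 K"
    proof cases
      case 1
      then have "x = \<one> \<otimes> z [^] (p ^ 1)" using Kc by auto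
      then show ?thesis unfolding mem_set_mult_Mho_iff using 1 subgroup.one_closed[OF Q] by blast
    next
      case 2
      then have "x = x \<otimes> \<one> [^] (p ^ 1)" using Qc by auto
      then show ?thesis unfolding mem_set_mult_Mho_iff using 2 subgroup.one_closed[OF K] by blast
    qed
  qed
  then have "K \<subseteq> Q <#> Mho 1 K" using gen generate_subgroup_incl[OF _ Z] by blast
  then have "K \<subseteq> Q <#> {\<one>}"
    using subset_set_mult_Mho_iterate[OF K Q, of \<alpha>] Mho_card_exponent[OF K] by simp
  then show ?thesis using Qc by (auto simp: set_mult_def subsetD)
qed

lemma exists_generating_set_over:
  assumes K: "subgroup K G" and W: "subgroup W G" and "W \<subseteq> K"
  shows "\<exists>T. T \<subseteq> K \<and> finite T \<and> K \<subseteq> generate G (W \<union> T) \<and> p ^ card T * card W \<le> card K"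
  using W \<open>W \<subseteq> K\<close>
proof (induction "card K - card W" arbitrary: W rule: less_induct)
  case less
  show ?case
  proof (cases "K \<subseteq> W")
    case True
    then show ?thesis using generate.incl[of _ W G] card_mono[OF finite_subgroup[OF K] less.prems(2)]
      by (intro exI[of _ "{}"]) auto
  next
    case False
    then obtain g where g: "g \<in> K" "g \<notin> W" by blast
    let ?W' = "generate G (insert g W)"
    have W': "subgroup ?W' G"
      using g subgroup.subset[OF K] subgroup.subset[OF less.prems(1)]
      by (intro generate_is_subgroup) blast
    have "W \<subset> ?W'" using g generate.incl[of _ "insert g W" G] by blast
    then have pW: "p * card W \<le> card ?W'" using card_psubset_subgroup_ge[OF less.prems(1) W'] by blast
    have W'K: "?W' \<subseteq> K" using g less.prems(2) by (intro generate_subgroup_incl[OF _ K]) blast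
    have "card W < card ?W'" using psubset_card_mono[OF finite_subgroup[OF W'] \<open>W \<subset> ?W'\<close>] .
    moreover have "card ?W' \<le> card K" using card_mono[OF finite_subgroup[OF K] W'K] .
    ultimately have "card K - card ?W' < card K - card W" by linarith
    then obtain T' where T': "T' \<subseteq> K" "finite T'" "K \<subseteq> generate G (?W' \<union> T')"
      "p ^ card T' * card ?W' \<le> card K"
      using less.hyps[OF _ W' W'K] by blast
    let ?T = "insert g T'"
    have "?W' \<union> T' \<subseteq> generate G (W \<union> ?T)"
      using mono_generate[of "insert g W" "W \<union> ?T"] generate.incl[of _ "W \<union> ?T" G] by blast
    moreover have "subgroup (generate G (W \<union> ?T)) G"
      using subgroup.subset[OF less.prems(1)] subgroup.subset[OF K] g T'(1)
      by (intro generate_is_subgroup) blast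
    ultimately have "generate G (?W' \<union> T') \<subseteq> generate G (W \<union> ?T)"
      by (rule generate_subgroup_incl)
    moreover have "p ^ card ?T * card W \<le> card K"
    proof -
      have "p ^ card ?T * card W \<le> p ^ Suc (card T') * card W"
        using card_insert_le_m1[of "card T'"] T'(2) p_gt_1
        by (intro mult_le_mono1 power_increasing) (auto simp: card_insert_if)
      also have "\<dots> \<le> p ^ card T' * card ?W'" using pW by (simp add: mult.assoc)
      finally show ?thesis using T'(4) by linarith
    qed
    ultimately show ?thesis using T' g by (intro exI[of _ ?T]) auto
  qed
qed

lemma exists_generating_set:
  assumes K: "subgroup K G"
  shows "\<exists>T. T \<subseteq> K \<and> finite T \<and> generate G T = K \<and> p ^ card T \<le> card (K \<inter> \<Omega> 1)"
proof -
  obtain T where T: "T \<subseteq> K" "finite T" "K \<subseteq> generate G (Mho 1 K \<union> T)"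
    "p ^ card T * card (Mho 1 K) \<le> card K"
    using exists_generating_set_over[OF K subgroup_Mho[OF K] Mho_subset[OF K]] by blast
  have Tc: "T \<subseteq> carrier G" using T(1) subgroup.subset[OF K] by blast
  have TK: "generate G T \<subseteq> K" using generate_subgroup_incl[OF T(1) K] .
  have "generate G (Mho 1 K \<union> T) \<subseteq> generate G (Mho 1 K \<union> generate G T)"
    using mono_generate generate.incl[of _ T G] by (metis Un_mono subset_refl subsetI)
  then have "K \<subseteq> generate G T"
    using subset_of_subset_generate_Mho_Un[OF K generate_is_subgroup[OF Tc]] T(3) by blast
  moreover have "p ^ card T \<le> card (K \<inter> \<Omega> 1)"
    using T(4) card_Int_Omega_mult_card_Mho[OF K, of 1] card_subgroup_pos[OF subgroup_Mho[OF K]]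
    by simp
  ultimately show ?thesis using T(1,2) TK by blast
qed

lemma root_translates_mem_rcosets:
  assumes S: "subgroup S G" and H: "subgroup H G" and "H \<subseteq> S"
    and l: "l \<in> S" "l [^] p \<in> Mho 1 H"
  shows "{y \<in> S \<inter> \<Omega> 1. l \<otimes> y \<in> H} \<in> rcosets\<^bsub>G\<lparr>carrier := S \<inter> \<Omega> 1\<rparr>\<^esub> (H \<inter> \<Omega> 1)"
proof -
  let ?E = "S \<inter> \<Omega> 1"
  have Sc: "S \<subseteq> carrier G" using subgroup.subset[OF S] .
  have E: "subgroup ?E G" using subgroups_Inter_pair[OF S subgroup_Omega] .
  obtain h where h: "h \<in> H" "l [^] p = h [^] p" using l(2) unfolding Mho_def by auto
  have lc: "l \<in> carrier G" and hc: "h \<in> carrier G" using l h \<open>H \<subseteq> S\<close> Sc by auto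
  define y0 where "y0 = inv l \<otimes> h"
  have y0c: "y0 \<in> carrier G" using lc hc y0_def by simp
  have "y0 \<in> S" using y0_def l h \<open>H \<subseteq> S\<close> subgroup.m_closed[OF S] subgroup.m_inv_closed[OF S] by blast
  moreover have "y0 [^] p = \<one>" unfolding y0_def using lc hc h by (simp add: nat_pow_distrib nat_pow_inv)
  ultimately have y0E: "y0 \<in> ?E" using y0c by (simp add: Omega_def)
  have ly0: "l \<otimes> y0 = h" unfolding y0_def using lc hc by (simp add: m_assoc[symmetric])
  have "{y \<in> ?E. l \<otimes> y \<in> H} = (H \<inter> \<Omega> 1) #> y0"
  proof
    show "{y \<in> ?E. l \<otimes> y \<in> H} \<subseteq> (H \<inter> \<Omega> 1) #> y0"
    proof
      fix y assume y: "y \<in> {y \<in> ?E. l \<otimes> y \<in> H}"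
      then have yc: "y \<in> carrier G" using Sc by auto
      have "y \<otimes> inv y0 = (l \<otimes> y) \<otimes> inv h" unfolding y0_def using yc lc hc
        by (simp add: inv_mult_group m_ac)
      then have "y \<otimes> inv y0 \<in> H"
        using y h subgroup.m_closed[OF H] subgroup.m_inv_closed[OF H] by simp
      moreover have "y \<otimes> inv y0 \<in> \<Omega> 1"
        using y y0E subgroup.m_closed[OF E] subgroup.m_inv_closed[OF E] by blast
      moreover have "y = (y \<otimes> inv y0) \<otimes> y0" using yc y0c by (simp add: m_assoc)
      ultimately show "y \<in> (H \<inter> \<Omega> 1) #> y0" unfolding r_coset_def by blast
    qed
    show "(H \<inter> \<Omega> 1) #> y0 \<subseteq> {y \<in> ?E. l \<otimes> y \<in> H}"
    proof
      fix y assume "y \<in> (H \<inter> \<Omega> 1) #> y0"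
      then obtain a where a: "a \<in> H" "a \<in> \<Omega> 1" "y = a \<otimes> y0" unfolding r_coset_def by blast
      have ac: "a \<in> carrier G" using a \<open>H \<subseteq> S\<close> Sc by auto
      have "y \<in> ?E" using a y0E \<open>H \<subseteq> S\<close> subgroup.m_closed[OF E] by blast
      moreover have "l \<otimes> y = a \<otimes> h" using a(3) ly0 ac lc y0c by (metis m_assoc m_comm)
      then have "l \<otimes> y \<in> H" using a h subgroup.m_closed[OF H] by simp
      ultimately show "y \<in> {y \<in> ?E. l \<otimes> y \<in> H}" by blast
    qed
  qed
  then show ?thesis unfolding mem_rcosets_subgroup_iff using y0E by blast
qed

lemma subset_of_Mho_subset_Mho_Int:
  assumes H1: "subgroup H1 G" and H2: "subgroup H2 G"
    and "Mho 1 H1 \<subseteq> Mho 1 (H1 \<inter> H2)" and "H1 \<inter> \<Omega> 1 \<subseteq> H2"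
  shows "H1 \<subseteq> H2"
proof
  fix x assume x: "x \<in> H1"
  have xc: "x \<in> carrier G" using x subgroup.subset[OF H1] by blast
  obtain h where h: "h \<in> H1" "h \<in> H2" "x [^] p = h [^] p"
    using x assms(3) unfolding Mho_def by auto
  have hc: "h \<in> carrier G" using h subgroup.subset[OF H1] by blast
  have "x \<otimes> inv h \<in> H1" using x h subgroup.m_closed[OF H1] subgroup.m_inv_closed[OF H1] by blast
  moreover have "(x \<otimes> inv h) [^] p = \<one>" using h xc hc by (simp add: nat_pow_distrib nat_pow_inv)
  ultimately have "x \<otimes> inv h \<in> H2" using assms(4) xc hc by (auto simp: Omega_def)
  then have "x \<otimes> inv h \<otimes> h \<in> H2" using h subgroup.m_closed[OF H2] by blast
  then show "x \<in> H2" using xc hc by (simp add: m_assoc)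
qed

lemma Mho_fibre_eqI:
  assumes H1: "subgroup H1 G" "H1 \<subseteq> S" "Mho 1 H1 = K"
    and H2: "subgroup H2 G" "H2 \<subseteq> S" "Mho 1 H2 = K"
    and T: "generate G T = K" and l: "\<And>k. k \<in> T \<Longrightarrow> l k \<in> S \<and> l k [^] p = k"
    and S: "subgroup S G"
    and eq_Omega: "H1 \<inter> \<Omega> 1 = H2 \<inter> \<Omega> 1"
    and eq_translates: "\<And>k. k \<in> T \<Longrightarrow> {y \<in> S \<inter> \<Omega> 1. l k \<otimes> y \<in> H1} = {y \<in> S \<inter> \<Omega> 1. l k \<otimes> y \<in> H2}"
  shows "H1 = H2"
proof -
  have H12: "subgroup (H1 \<inter> H2) G" using subgroups_Inter_pair[OF H1(1) H2(1)] .
  have "T \<subseteq> Mho 1 (H1 \<inter> H2)"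
  proof
    fix k assume k: "k \<in> T"
    have "k \<in> K" using k T generate.incl[of _ T G] by blast
    then have "{y \<in> S \<inter> \<Omega> 1. l k \<otimes> y \<in> H1} \<in> rcosets\<^bsub>G\<lparr>carrier := S \<inter> \<Omega> 1\<rparr>\<^esub> (H1 \<inter> \<Omega> 1)"
      using root_translates_mem_rcosets[OF S H1(1,2)] l[OF k] H1(3) by simp
    then obtain y where y: "y \<in> S \<inter> \<Omega> 1" "{y \<in> S \<inter> \<Omega> 1. l k \<otimes> y \<in> H1} = (H1 \<inter> \<Omega> 1) #> y"
      unfolding mem_rcosets_subgroup_iff by blast
    then have "y \<in> (H1 \<inter> \<Omega> 1) #> y"
      using subgroup.subset[OF S] by (intro rcos_self subgroups_Inter_pair H1(1) subgroup_Omega) auto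
    then have "y \<in> S \<inter> \<Omega> 1" "l k \<otimes> y \<in> H1" using y(2) by blast+
    moreover have "l k \<otimes> y \<in> H2" using eq_translates[OF k] calculation by blast
    moreover have "l k \<in> carrier G" "y \<in> carrier G" "y [^] p = \<one>"
      using l[OF k] subgroup.subset[OF S] calculation(1) by (auto simp: Omega_def)
    then have "(l k \<otimes> y) [^] p = l k [^] p" by (simp add: nat_pow_distrib)
    then have "(l k \<otimes> y) [^] p = k" using l[OF k] by simp
    ultimately show "k \<in> Mho 1 (H1 \<inter> H2)" unfolding Mho_def by force
  qed
  then have "K \<subseteq> Mho 1 (H1 \<inter> H2)" using T generate_subgroup_incl[OF _ subgroup_Mho[OF H12]] by blast
  then show ?thesis
    using subset_of_Mho_subset_Mho_Int[OF H1(1) H2(1)] subset_of_Mho_subset_Mho_Int[OF H2(1) H1(1)]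
      H1(3) H2(3) eq_Omega by (metis Int_commute Int_lower2 subset_antisym)
qed

text \<open>A subgroup \<open>H \<subseteq> S\<close> with \<open>Mho 1 H = K\<close> is encoded by \<open>H \<inter> \<Omega> 1\<close> together with,
  for each generator \<open>k\<close> of \<open>K\<close>, the coset of \<open>y\<close> with \<open>l k \<otimes> y \<in> H\<close>, where \<open>l k\<close> is a
  fixed \<open>p\<close>-th root of \<open>k\<close> in \<open>S\<close>.\<close>

lemma card_Mho_fibre_le:
  assumes S: "subgroup S G" and K: "subgroup K G" and "K \<subseteq> Mho 1 S"
    and T: "T \<subseteq> K" "finite T" "generate G T = K"
  shows "card {H. subgroup H G \<and> H \<subseteq> S \<and> Mho 1 H = K}
    \<le> (\<Sum>A\<in>{A. subgroup A G \<and> K \<inter> \<Omega> 1 \<subseteq> A \<and> A \<subseteq> S \<inter> \<Omega> 1}. (card (S \<inter> \<Omega> 1) div card A) ^ card T)"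
proof -
  let ?E = "S \<inter> \<Omega> 1"
  let ?fibre = "{H. subgroup H G \<and> H \<subseteq> S \<and> Mho 1 H = K}"
  let ?As = "{A. subgroup A G \<and> K \<inter> \<Omega> 1 \<subseteq> A \<and> A \<subseteq> ?E}"
  let ?cosets = "\<lambda>A. rcosets\<^bsub>G\<lparr>carrier := ?E\<rparr>\<^esub> A"
  have E: "subgroup ?E G" using subgroups_Inter_pair[OF S subgroup_Omega] .
  have "\<forall>k\<in>T. \<exists>x. x \<in> S \<and> x [^] p = k" using T(1) \<open>K \<subseteq> Mho 1 S\<close> unfolding Mho_def by auto
  then obtain l where l: "\<And>k. k \<in> T \<Longrightarrow> l k \<in> S \<and> l k [^] p = k" by metis
  define enc where "enc H = (H \<inter> \<Omega> 1, \<lambda>k\<in>T. {y \<in> ?E. l k \<otimes> y \<in> H})" for H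
  have "inj_on enc ?fibre"
  proof (rule inj_onI)
    fix H1 H2 assume H1: "H1 \<in> ?fibre" and H2: "H2 \<in> ?fibre" and "enc H1 = enc H2"
    then have eq_Omega: "H1 \<inter> \<Omega> 1 = H2 \<inter> \<Omega> 1"
      and eq_restrict: "(\<lambda>k\<in>T. {y \<in> ?E. l k \<otimes> y \<in> H1}) = (\<lambda>k\<in>T. {y \<in> ?E. l k \<otimes> y \<in> H2})"
      unfolding enc_def by simp_all
    have "{y \<in> ?E. l k \<otimes> y \<in> H1} = {y \<in> ?E. l k \<otimes> y \<in> H2}" if "k \<in> T" for k
      using fun_cong[OF eq_restrict, of k] that by simp
    then show "H1 = H2" using Mho_fibre_eqI[OF _ _ _ _ _ _ T(3) l S eq_Omega] H1 H2 by blast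
  qed
  moreover have "enc ` ?fibre \<subseteq> Sigma ?As (\<lambda>A. T \<rightarrow>\<^sub>E ?cosets A)"
  proof
    fix q assume "q \<in> enc ` ?fibre"
    then obtain H where H: "subgroup H G" "H \<subseteq> S" "Mho 1 H = K" "q = enc H" by blast
    have "H \<inter> \<Omega> 1 \<in> ?As"
      using subgroups_Inter_pair[OF H(1) subgroup_Omega] Mho_subset[OF H(1)] H(2,3) by blast
    moreover have "{y \<in> ?E. l k \<otimes> y \<in> H} \<in> ?cosets (H \<inter> \<Omega> 1)" if "k \<in> T" for k
    proof (rule root_translates_mem_rcosets[OF S H(1,2)])
      show "l k \<in> S" "l k [^] p \<in> Mho 1 H" using l[OF that] T(1) H(3) that by auto
    qed
    ultimately show "q \<in> Sigma ?As (\<lambda>A. T \<rightarrow>\<^sub>E ?cosets A)" using H(4) unfolding enc_def by auto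
  qed
  moreover have finite_cosets: "finite (?cosets A)" for A
    unfolding RCOSETS_def using finite_subgroup[OF E] by simp
  moreover have "finite ?As" using finite_Collect_subgroup by simp
  ultimately have "card ?fibre \<le> card (Sigma ?As (\<lambda>A. T \<rightarrow>\<^sub>E ?cosets A))"
    by (intro card_inj_on_le finite_SigmaI finite_PiE T(2))
  also have "\<dots> = (\<Sum>A\<in>?As. card (?cosets A) ^ card T)"
    using \<open>finite ?As\<close> finite_cosets T(2) by (simp add: card_SigmaI card_funcsetE finite_PiE)
  also have "\<dots> = (\<Sum>A\<in>?As. (card ?E div card A) ^ card T)"
    using card_rcosets_subgroup_eq_div[OF _ E _ finite_subgroup] by (intro sum.cong refl) auto
  finally show ?thesis .
qed

lemma card_Mho_fibre_le_powr:
  assumes S: "subgroup S G" and cE: "card (S \<inter> \<Omega> 1) = p ^ n"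
    and K: "subgroup K G" and KS: "K \<subseteq> Mho 1 S"
  shows "real (card {H. subgroup H G \<and> H \<subseteq> S \<and> Mho 1 H = K}) \<le> real p powr (real n ^ 2 / 4 + 2 * real n)"
proof -
  obtain T where T: "T \<subseteq> K" "finite T" "generate G T = K" "p ^ card T \<le> card (K \<inter> \<Omega> 1)"
    using exists_generating_set[OF K] by blast
  have D: "subgroup (K \<inter> \<Omega> 1) G" using subgroups_Inter_pair[OF K subgroup_Omega] .
  have E: "subgroup (S \<inter> \<Omega> 1) G" using subgroups_Inter_pair[OF S subgroup_Omega] .
  obtain d where d: "card (K \<inter> \<Omega> 1) = p ^ d" using card_subgroup_eq_power[OF D] by blast
  have "card T \<le> d" using T(4) d p_gt_1 power_le_imp_le_exp by metis
  have DE: "K \<inter> \<Omega> 1 \<subseteq> S \<inter> \<Omega> 1" using KS Mho_subset[OF S] by blast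
  then have "p ^ d \<le> p ^ n" using card_mono[OF finite_subgroup[OF E] DE] d cE by simp
  then obtain m where n: "n = d + m" using p_gt_1 power_le_imp_le_exp le_Suc_ex by metis
  have "card {H. subgroup H G \<and> H \<subseteq> S \<and> Mho 1 H = K}
      \<le> (\<Sum>t\<le>m. (m choose t) * p ^ (t * (m - t) + t) * p ^ ((m - t) * d))"
    using card_Mho_fibre_le[OF S K KS T(1-3)] sum_index_power_le[OF D E DE _ d _ \<open>card T \<le> d\<close>] cE n
    by fastforce
  then have "real (card {H. subgroup H G \<and> H \<subseteq> S \<and> Mho 1 H = K})
      \<le> real (\<Sum>t\<le>m. (m choose t) * p ^ (t * (m - t) + t) * p ^ ((m - t) * d))"
    by (rule of_nat_mono)
  also have "\<dots> \<le> real p powr (real (d + m) ^ 2 / 4 + 2 * real (d + m))"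
    by (rule sum_binomial_power_le_powr) (use p_gt_1 in simp)
  finally show ?thesis using n by simp
qed

definition subgroups_in :: "'a set \<Rightarrow> 'a set set" where
  "subgroups_in S = {H. subgroup H G \<and> H \<subseteq> S}"

lemma card_subgroups_in_le:
  assumes S: "subgroup S G" and cE: "card (S \<inter> \<Omega> 1) = p ^ n"
  shows "real (card (subgroups_in S))
    \<le> real (card (subgroups_in (Mho 1 S))) * real p powr (real n ^ 2 / 4 + 2 * real n)"
proof -
  let ?fibre = "\<lambda>K. {H. subgroup H G \<and> H \<subseteq> S \<and> Mho 1 H = K}"
  have finite: "finite (subgroups_in S')" for S'
    unfolding subgroups_in_def using finite_Collect_subgroup by simp
  have "subgroups_in S \<subseteq> (\<Union>K\<in>subgroups_in (Mho 1 S). ?fibre K)"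
  proof
    fix H assume "H \<in> subgroups_in S"
    then have H: "subgroup H G" "H \<subseteq> S" by (simp_all add: subgroups_in_def)
    then have "Mho 1 H \<in> subgroups_in (Mho 1 S)"
      unfolding subgroups_in_def using subgroup_Mho Mho_mono by blast
    then show "H \<in> (\<Union>K\<in>subgroups_in (Mho 1 S). ?fibre K)" using H by blast
  qed
  then have "card (subgroups_in S) \<le> card (\<Union>K\<in>subgroups_in (Mho 1 S). ?fibre K)"
    using finite_Collect_subgroup finite by (intro card_mono finite_UN_I) auto
  also have "\<dots> \<le> (\<Sum>K\<in>subgroups_in (Mho 1 S). card (?fibre K))"
    by (rule card_UN_le[OF finite])
  finally have "card (subgroups_in S) \<le> (\<Sum>K\<in>subgroups_in (Mho 1 S). card (?fibre K))" .
  then have "real (card (subgroups_in S)) \<le> (\<Sum>K\<in>subgroups_in (Mho 1 S). real (card (?fibre K)))"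
    unfolding of_nat_sum[symmetric] by (rule of_nat_mono)
  also have "\<dots> \<le> (\<Sum>K\<in>subgroups_in (Mho 1 S). real p powr (real n ^ 2 / 4 + 2 * real n))"
    using card_Mho_fibre_le_powr[OF S cE] by (intro sum_mono) (simp add: subgroups_in_def)
  finally show ?thesis by simp
qed

lemma card_Sub_le_prod:
  "real (card (Sub G)) \<le> (\<Prod>i=1..\<alpha>. real p powr (real (layer G p i) ^ 2 / 4 + 2 * real (layer G p i)))"
proof -
  let ?b = "\<lambda>i. real p powr (real (layer G p i) ^ 2 / 4 + 2 * real (layer G p i))"
  let ?N = "\<lambda>j. real (card (subgroups_in (Mho j (carrier G))))"
  have step: "?N j \<le> ?N (Suc j) * ?b (Suc j)" for j
  proof -
    have "card (Mho j (carrier G) \<inter> \<Omega> 1) = p ^ layer G p (Suc j)"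
      using card_Omega_Int_Mho[of j] by (simp add: Int_commute)
    from card_subgroups_in_le[OF subgroup_Mho[OF subgroup_self] this]
    show ?thesis using Mho_Mho[of "carrier G" 1 j] by simp
  qed
  have iter: "?N 0 \<le> ?N k * (\<Prod>i=1..k. ?b i)" for k
  proof (induction k)
    case (Suc k)
    have "?N k * (\<Prod>i=1..k. ?b i) \<le> ?N (Suc k) * ?b (Suc k) * (\<Prod>i=1..k. ?b i)"
      using step by (intro mult_right_mono prod_nonneg) auto
    then show ?case using Suc by (simp add: mult_ac)
  qed simp
  moreover have "subgroups_in (Mho 0 (carrier G)) = Sub G"
    unfolding subgroups_in_def Sub_def Mho_0[OF subset_refl] using subgroup.subset by blast
  moreover have "subgroups_in (Mho \<alpha> (carrier G)) = {{\<one>}}"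
    unfolding subgroups_in_def Mho_card_exponent[OF subgroup_self]
    using triv_subgroup subgroup.one_closed by blast
  ultimately show ?thesis using iter[of \<alpha>] by simp
qed

lemma card_Sub_le:
  "real (card (Sub G)) \<le> real (card (carrier G)) ^ 2 * (\<Prod>i=1..\<alpha>. real p powr (real (layer G p i) ^ 2 / 4))"
proof -
  have "(\<Prod>i=1..\<alpha>. real p powr (real (layer G p i) ^ 2 / 4 + 2 * real (layer G p i)))
      = real p powr (\<Sum>i=1..\<alpha>. 2 * real (layer G p i)) * (\<Prod>i=1..\<alpha>. real p powr (real (layer G p i) ^ 2 / 4))"
    using p_gt_1 by (simp add: powr_add powr_sum prod.distrib mult.commute)
  also have "real p powr (\<Sum>i=1..\<alpha>. 2 * real (layer G p i)) = real (card (carrier G)) ^ 2"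
  proof -
    have "(\<Sum>i=1..\<alpha>. 2 * real (layer G p i)) = 2 * (\<Sum>i=1..\<alpha>. real (layer G p i))"
      by (simp add: sum_distrib_left)
    then show ?thesis
      unfolding card_carrier_eq_powr using p_gt_1 by (simp add: powr_realpow[symmetric] powr_powr mult.commute)
  qed
  finally show ?thesis using card_Sub_le_prod by simp
qed

end

theorem corollary6p4:
  fixes G :: "('a, 'b) monoid_scheme" and p \<alpha> :: nat
  assumes "comm_group G" and "finite (carrier G)" and "Factorial_Ring.prime p"
    and "card (carrier G) = p ^ \<alpha>"
  shows "inverse (real (card (carrier G))) *
           (\<Prod>i\<in>{i. 1 \<le> i \<and> layer G p i \<noteq> 0}. real p powr (real (layer G p i) ^ 2 / 4))
           \<le> real (card (Sub G))
       \<and> real (card (Sub G))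
           \<le> real (card (carrier G)) ^ 2 *
             (\<Prod>i\<in>{i. 1 \<le> i \<and> layer G p i \<noteq> 0}. real p powr (real (layer G p i) ^ 2 / 4))"
proof -
  interpret finite_abelian_p_group G p \<alpha>
    using assms by (simp add: finite_abelian_p_group_def finite_abelian_p_group_axioms_def)
  show ?thesis unfolding prod_layer_powr_eq using card_Sub_ge card_Sub_le by blast
qed

end
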